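(* Let $\mu>0$ and $A=3\big(\frac{\pi\mu}{2}\big)^{2/3}$, $B=3\big(\frac{\mu^2}{4\pi}\big)^{2/3}$. For every $\delta\in(0,\tfrac16)$, as $N\to\infty$, $$Z_N^{(\mu)}=(e^\mu-1)\sqrt{\frac{\pi}{B}}\,\frac{\mu}{2}\,e^{-AN^{1/3}}N^{-5/6}4^N\big(1+O(N^{-\delta})\big).$$
   Context: $Z_N^{(\mu)}=\sum_{T:|T|=N}e^{-\mu h(T)}$, the sum over rooted planar trees (root of degree 1) with $N$ edges, $h(T)$ the height (maximal distance of a vertex from the root). *)

theory Defs
  imports "HOL-Analysis.Analysis" "HOL-Library.Landau_Symbols"
begin

datatype ptree = Node "ptree list"

fun edges :: "ptree \<Rightarrow> nat" where
  "edges (Node ts) = sum_list (map (\<lambda>t. Suc (edges t)) ts)"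

fun height :: "ptree \<Rightarrow> nat" where
  "height (Node ts) = Max (insert 0 (set (map (\<lambda>t. Suc (height t)) ts)))"

definition planted_trees :: "nat \<Rightarrow> ptree set" where
  "planted_trees N = {T. (\<exists>t. T = Node [t]) \<and> edges T = N}"

definition Z :: "real \<Rightarrow> nat \<Rightarrow> real" where
  "Z \<mu> N = (\<Sum>T\<in>planted_trees N. exp (- \<mu> * real (height T)))"

end

theory Submission
  imports Defs "HOL-Probability.Distributions" "HOL-Real_Asymp.Real_Asymp"
begin

text \<open>Write \<open>Z (n + 1)\<close> as the sum of \<open>exp (- \<mu> (h t + 1))\<close> over the plane trees \<open>t\<close> with
  \<open>n\<close> edges. Summation by parts reduces it to the numbers of such trees of height at most \<open>k\<close>,
  i.e. of Dyck paths of length \<open>2 n\<close> confined to a strip, which the spectral form of the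
  reflection principle counts as \<open>4^n (2/m) \<Sum>\<^sub>j sin(j\<pi>/m)^2 cos(j\<pi>/m)^(2n)\<close> with \<open>m = k + 2\<close>.
  Only \<open>j = 1\<close> matters, so \<open>Z (n + 1) \<approx> (e^\<mu> - 1) 4^n \<Sum>\<^sub>m 4\<pi>^2/m^3 exp (- \<pi>^2 n/m^2 - \<mu> m)\<close>.
  The exponent is minimal at \<open>m0 = (2\<pi>^2 n/\<mu>)^(1/3)\<close>, where it equals \<open>A n^(1/3)\<close>; a Gaussian
  window of half-width \<open>n^(2/9 - \<delta>/3)\<close> around \<open>m0\<close> yields the factor \<open>sqrt (\<pi>/B) n^(1/6)\<close>,
  and all other contributions are smaller by a factor \<open>n^-\<delta>\<close>.\<close>

section \<open>Trees of bounded height and walks in a strip\<close>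

text \<open>A prefix of length \<open>L\<close> of a Dyck path that ends at level \<open>i\<close> and never rises above
  level \<open>k\<close> is encoded by the stack of the \<open>i + 1\<close> trees under construction in the
  depth-first traversal: the head is the tree currently being built at depth \<open>i\<close>, the tail
  holds its partially built ancestors, with already completed children in reverse order.\<close>

fun in_strip :: "nat \<Rightarrow> nat \<Rightarrow> ptree list \<Rightarrow> bool" where
  "in_strip k i [] = False"
| "in_strip k i (t # ts) =
     (height t + i \<le> k \<and> (if ts = [] then i = 0 else 0 < i \<and> in_strip k (i - 1) ts))"

definition walk_length :: "nat \<Rightarrow> ptree list \<Rightarrow> nat" where
  "walk_length i ts = 2 * sum_list (map edges ts) + i"

definition strip_forests :: "nat \<Rightarrow> nat \<Rightarrow> nat \<Rightarrow> ptree list set" where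
  "strip_forests k L i = {ts. in_strip k i ts \<and> walk_length i ts = L}"

definition cons_leaf :: "ptree list \<Rightarrow> ptree list" where
  "cons_leaf ts = Node [] # ts"

fun graft_head :: "ptree list \<Rightarrow> ptree list" where
  "graft_head (c # Node cs # rest) = Node (c # cs) # rest"
| "graft_head ts = ts"

lemma height_Node_Cons: "height (Node (c # cs)) = max (Suc (height c)) (height (Node cs))"
proof -
  have "height (Node (c # cs)) = Max (insert (Suc (height c)) (insert 0 ((\<lambda>t. Suc (height t)) ` set cs)))"
    by (simp add: insert_commute)
  also have "\<dots> = max (Suc (height c)) (Max (insert 0 ((\<lambda>t. Suc (height t)) ` set cs)))"
    by (rule Max_insert) auto
  finally show ?thesis by simp
qed

lemma edges_eq_0_iff: "edges t = 0 \<longleftrightarrow> t = Node []"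
  by (cases t) auto

lemma in_strip_nonempty: "in_strip k i ts \<Longrightarrow> ts \<noteq> []"
  by (cases ts) auto

lemma in_strip_Suc_shape: "in_strip k (Suc i) ts \<Longrightarrow> \<exists>c cs rest. ts = c # Node cs # rest"
  by (cases ts; cases "tl ts"; cases "hd (tl ts)") (auto split: if_splits)

lemma strip_forests_0: "strip_forests k 0 i = (if i = 0 then {[Node []]} else {})"
proof -
  have "ts \<in> strip_forests k 0 i \<longleftrightarrow> i = 0 \<and> ts = [Node []]" for ts
  proof
    assume "ts \<in> strip_forests k 0 i"
    then have ts: "in_strip k i ts" and "walk_length i ts = 0" by (auto simp: strip_forests_def)
    then have i: "i = 0" and leaves: "\<forall>t\<in>set ts. edges t = 0" by (auto simp: walk_length_def)
    from ts i show "i = 0 \<and> ts = [Node []]"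
      using leaves by (cases ts) (auto simp: edges_eq_0_iff split: if_splits)
  qed (auto simp: strip_forests_def walk_length_def)
  then show ?thesis by auto
qed

lemma strip_forests_above: "k < i \<Longrightarrow> strip_forests k L i = {}"
proof -
  assume "k < i"
  then have "\<not> in_strip k i ts" for ts by (cases ts) auto
  then show ?thesis by (auto simp: strip_forests_def)
qed

text \<open>Removing the last step of the path: an up-step created an empty tree on top of the
  stack, a down-step grafted the finished head onto its parent.\<close>

lemma strip_forests_Suc_cases:
  assumes "ts \<in> strip_forests k (Suc L) i"
  obtains ts' where "0 < i" "ts' \<in> strip_forests k L (i - 1)" "ts = cons_leaf ts'"
    | ts' where "i < k" "ts' \<in> strip_forests k L (Suc i)" "ts = graft_head ts'"
proof -
  from assms have ts: "in_strip k i ts" and len: "walk_length i ts = Suc L"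
    by (auto simp: strip_forests_def)
  then obtain cs rest where ts_eq: "ts = Node cs # rest" by (metis in_strip_nonempty list.exhaust ptree.exhaust)
  show thesis
  proof (cases cs)
    case Nil
    with ts len ts_eq have "rest \<noteq> []" by (auto simp: walk_length_def)
    with ts ts_eq have "0 < i" "in_strip k (i - 1) rest" by auto
    moreover have "walk_length (i - 1) rest = L"
      using len ts_eq Nil \<open>0 < i\<close> by (auto simp: walk_length_def)
    ultimately show thesis
      using that(1)[of rest] ts_eq Nil by (auto simp: strip_forests_def cons_leaf_def)
  next
    case (Cons c cs')
    have "height c + Suc i \<le> k" "height (Node cs') + i \<le> k"
      using ts ts_eq Cons height_Node_Cons[of c cs'] by auto
    with ts ts_eq have "i < k" "in_strip k (Suc i) (c # Node cs' # rest)"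
      by (auto split: if_splits)
    moreover have "walk_length (Suc i) (c # Node cs' # rest) = L"
      using len ts_eq Cons by (simp add: walk_length_def)
    ultimately show thesis
      using that(2)[of "c # Node cs' # rest"] ts_eq Cons by (auto simp: strip_forests_def)
  qed
qed

lemma cons_leaf_in_strip_forests:
  assumes "i \<le> k" "0 < i" "ts \<in> strip_forests k L (i - 1)"
  shows "cons_leaf ts \<in> strip_forests k (Suc L) i"
  using assms in_strip_nonempty[of k "i - 1" ts]
  by (auto simp: strip_forests_def walk_length_def cons_leaf_def)

lemma graft_head_in_strip_forests:
  assumes "ts \<in> strip_forests k L (Suc i)"
  shows "graft_head ts \<in> strip_forests k (Suc L) i"
proof -
  from assms have ts: "in_strip k (Suc i) ts" and len: "walk_length (Suc i) ts = L"
    by (auto simp: strip_forests_def)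
  from in_strip_Suc_shape[OF ts] obtain c cs rest where ts_eq: "ts = c # Node cs # rest" by blast
  have "in_strip k i (Node (c # cs) # rest)"
    using ts ts_eq height_Node_Cons[of c cs] by (auto split: if_splits)
  moreover have "walk_length i (Node (c # cs) # rest) = Suc L"
    using len ts_eq by (simp add: walk_length_def)
  moreover have "graft_head ts = Node (c # cs) # rest" using ts_eq by simp
  ultimately show ?thesis unfolding strip_forests_def by (simp only: mem_Collect_eq)
qed

lemma strip_forests_Suc:
  assumes "i \<le> k"
  shows "strip_forests k (Suc L) i =
    (if 0 < i then cons_leaf ` strip_forests k L (i - 1) else {}) \<union>
    (if i < k then graft_head ` strip_forests k L (Suc i) else {})"
    (is "_ = ?up \<union> ?down")
proof (intro set_eqI iffI)
  fix ts assume "ts \<in> strip_forests k (Suc L) i"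
  then show "ts \<in> ?up \<union> ?down" by (cases rule: strip_forests_Suc_cases) auto
next
  fix ts assume "ts \<in> ?up \<union> ?down"
  then show "ts \<in> strip_forests k (Suc L) i"
    using assms cons_leaf_in_strip_forests graft_head_in_strip_forests
    by (auto split: if_splits)
qed

lemma finite_strip_forests: "finite (strip_forests k L i)"
proof (induction L arbitrary: i)
  case (Suc L)
  then show ?case by (cases "i \<le> k") (simp_all add: strip_forests_Suc strip_forests_above)
qed (simp add: strip_forests_0)

lemma graft_head_shape:
  assumes "ts \<in> strip_forests k L (Suc i)"
  obtains c cs rest where "ts = c # Node cs # rest" "graft_head ts = Node (c # cs) # rest"
  using assms unfolding strip_forests_def by (auto dest: in_strip_Suc_shape)

lemma card_strip_forests_Suc:
  assumes "i \<le> k"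
  shows "card (strip_forests k (Suc L) i) =
    (if 0 < i then card (strip_forests k L (i - 1)) else 0) +
    (if i < k then card (strip_forests k L (Suc i)) else 0)"
proof -
  define up where "up = (if 0 < i then cons_leaf ` strip_forests k L (i - 1) else {})"
  define down where "down = (if i < k then graft_head ` strip_forests k L (Suc i) else {})"
  have "inj_on graft_head (strip_forests k L (Suc i))"
  proof (rule inj_onI)
    fix ts ts' assume "ts \<in> strip_forests k L (Suc i)" "ts' \<in> strip_forests k L (Suc i)"
      and "graft_head ts = graft_head ts'"
    then show "ts = ts'" by (elim graft_head_shape) simp
  qed
  then have "card down = (if i < k then card (strip_forests k L (Suc i)) else 0)"
    by (simp add: down_def card_image)
  moreover have "card up = (if 0 < i then card (strip_forests k L (i - 1)) else 0)"
    by (simp add: up_def card_image inj_on_def cons_leaf_def)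
  moreover have "up \<inter> down = {}"
    by (auto simp: up_def down_def cons_leaf_def elim: graft_head_shape split: if_splits)
  moreover have "finite up" "finite down"
    by (simp_all add: up_def down_def finite_strip_forests)
  ultimately show ?thesis
    unfolding strip_forests_Suc[OF assms] up_def[symmetric] down_def[symmetric]
    by (simp add: card_Un_disjoint)
qed

lemma sin_half_times_sum_cos:
  "2 * sin (x / 2) * (\<Sum>j=1..n. cos (real j * x)) = sin ((2 * real n + 1) * x / 2) - sin (x / 2)"
proof (induction n)
  case (Suc n)
  have "2 * sin (x / 2) * (\<Sum>j=1..Suc n. cos (real j * x)) =
      2 * sin (x / 2) * (\<Sum>j=1..n. cos (real j * x)) + 2 * cos (real (Suc n) * x) * sin (x / 2)"
    by (simp add: algebra_simps)
  also have "2 * cos (real (Suc n) * x) * sin (x / 2) =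
      sin (real (Suc n) * x + x / 2) - sin (real (Suc n) * x - x / 2)"
    by (simp add: sin_add sin_diff)
  also have "real (Suc n) * x + x / 2 = (2 * real (Suc n) + 1) * x / 2" by (simp add: field_simps)
  also have "real (Suc n) * x - x / 2 = (2 * real n + 1) * x / 2" by (simp add: field_simps)
  finally show ?case using Suc by simp
qed simp

lemma sum_cos_multiples:
  assumes M: "M \<ge> 1" and r: "0 < r" "r < 2 * M"
  shows "(\<Sum>j=1..M-1. cos (real j * (real r * pi / real M))) = - (1 + (-1)^r) / 2"
proof -
  define x where "x = real r * pi / real M"
  have "sin (x / 2) > 0"
  proof (rule sin_gt_zero)
    show "0 < x / 2" using M r by (simp add: x_def)
    have "real r * pi < 2 * real M * pi" using r by simp
    then show "x / 2 < pi" using M by (simp add: x_def field_simps)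
  qed
  moreover have eq: "(2 * real (M - 1) + 1) * x / 2 = real r * pi - x / 2"
    using M by (simp add: x_def field_simps of_nat_diff)
  have "2 * sin (x / 2) * (\<Sum>j=1..M-1. cos (real j * x)) = - ((-1)^r * sin (x / 2)) - sin (x / 2)"
    using sin_half_times_sum_cos[of x "M - 1", unfolded eq] by (simp add: sin_diff sin_npi cos_npi)
  then have "2 * sin (x / 2) * (\<Sum>j=1..M-1. cos (real j * x)) = 2 * sin (x / 2) * (- (1 + (-1)^r) / 2)"
    by (simp add: algebra_simps)
  with \<open>sin (x / 2) > 0\<close> show ?thesis by (simp add: x_def)
qed

text \<open>Spectral formula for the number of walks with steps \<open>\<plusminus>1\<close> and length \<open>L\<close> from level 1 to
  level \<open>x\<close> that stay inside \<open>{1..k+1}\<close>; the levels \<open>0\<close> and \<open>k + 2\<close> are absorbing.\<close>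

definition strip_walks :: "nat \<Rightarrow> nat \<Rightarrow> nat \<Rightarrow> real" where
  "strip_walks k L x = 2 / real (k + 2) *
     (\<Sum>j=1..k+1. let \<theta> = real j * pi / real (k + 2) in sin \<theta> * sin (real x * \<theta>) * (2 * cos \<theta>)^L)"

lemma strip_walks_0: "strip_walks k L 0 = 0"
  by (simp add: strip_walks_def)

lemma strip_walks_ceiling: "strip_walks k L (k + 2) = 0"
proof -
  have "sin (real (k + 2) * (real j * pi / real (k + 2))) = 0" for j
    by (simp add: sin_npi)
  then show ?thesis by (simp add: strip_walks_def)
qed

lemma strip_walks_Suc:
  assumes "1 \<le> x"
  shows "strip_walks k (Suc L) x = strip_walks k L (x - 1) + strip_walks k L (x + 1)"
proof -
  have step: "sin (real x * t) * (2 * cos t) = sin (real (x - 1) * t) + sin (real (x + 1) * t)" for t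
    using assms by (simp add: of_nat_diff algebra_simps sin_add sin_diff)
  have "sin t * sin (real x * t) * (2 * cos t)^Suc L =
      sin t * (2 * cos t)^L * (sin (real x * t) * (2 * cos t))" for t
    by (simp only: power_Suc mult_ac)
  then have "sin t * sin (real x * t) * (2 * cos t)^Suc L =
      sin t * sin (real (x - 1) * t) * (2 * cos t)^L + sin t * sin (real (x + 1) * t) * (2 * cos t)^L"
    for t unfolding step by (simp add: algebra_simps)
  then show ?thesis
    by (simp add: strip_walks_def Let_def sum.distrib algebra_simps sum_distrib_left)
qed

lemma strip_walks_start:
  assumes "i \<le> k"
  shows "strip_walks k 0 (i + 1) = (if i = 0 then 1 else 0)"
proof -
  define M where "M = k + 2"
  define \<theta> where "\<theta> j = real j * pi / real M" for j :: nat
  have M: "M \<ge> 1" "real M \<noteq> 0" by (simp_all add: M_def)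
  have prod: "sin (\<theta> j) * sin (real (i + 1) * \<theta> j) =
      (cos (real j * (real i * pi / real M)) - cos (real j * (real (i + 2) * pi / real M))) / 2" for j
  proof -
    have "sin (\<theta> j) * sin (real (i + 1) * \<theta> j) =
        (cos (real (i + 1) * \<theta> j - \<theta> j) - cos (real (i + 1) * \<theta> j + \<theta> j)) / 2"
      by (metis mult.commute sin_times_sin)
    moreover have "real (i + 1) * \<theta> j - \<theta> j = real j * (real i * pi / real M)"
      and "real (i + 1) * \<theta> j + \<theta> j = real j * (real (i + 2) * pi / real M)"
      by (simp_all add: \<theta>_def divide_simps algebra_simps)
    ultimately show ?thesis by simp
  qed
  have "strip_walks k 0 (i + 1) = 2 / real M * (\<Sum>j=1..M-1. sin (\<theta> j) * sin (real (i + 1) * \<theta> j))"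
    by (simp add: strip_walks_def \<theta>_def M_def Let_def)
  also have "\<dots> = ((\<Sum>j=1..M-1. cos (real j * (real i * pi / real M)))
      - (\<Sum>j=1..M-1. cos (real j * (real (i + 2) * pi / real M)))) / real M"
    unfolding prod sum_divide_distrib[symmetric] sum_subtractf using M(2) by (simp add: divide_simps)
  also have "(\<Sum>j=1..M-1. cos (real j * (real (i + 2) * pi / real M))) = - (1 + (-1)^i) / 2"
    using sum_cos_multiples[OF M(1), of "i + 2"] assms by (simp add: M_def)
  also have "(\<Sum>j=1..M-1. cos (real j * (real i * pi / real M))) =
      (if i = 0 then real M - 1 else - (1 + (-1)^i) / 2)"
    using sum_cos_multiples[OF M(1), of i] assms M(1) by (simp add: M_def of_nat_diff)
  finally show ?thesis using M by (auto simp: field_simps)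
qed
lemma card_strip_forests:
  "i \<le> k \<Longrightarrow> real (card (strip_forests k L i)) = strip_walks k L (i + 1)"
proof (induction L arbitrary: i)
  case 0
  then show ?case using strip_walks_start[OF 0] by (simp add: strip_forests_0)
next
  case (Suc L)
  have "real (card (strip_forests k (Suc L) i)) =
     (if 0 < i then strip_walks k L i else 0) + (if i < k then strip_walks k L (i + 2) else 0)"
    using Suc by (simp add: card_strip_forests_Suc)
  also have "\<dots> = strip_walks k L i + strip_walks k L (i + 2)"
    using Suc.prems strip_walks_0[of k L] strip_walks_ceiling[of k L]
    by (cases "i = 0"; cases "i = k") auto
  also have "\<dots> = strip_walks k (Suc L) (i + 1)" by (simp add: strip_walks_Suc)
  finally show ?case .
qed

definition bounded_trees :: "nat \<Rightarrow> nat \<Rightarrow> ptree set" where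
  "bounded_trees k n = {t. edges t = n \<and> height t \<le> k}"

lemma strip_forests_singletons: "strip_forests k (2 * n) 0 = (\<lambda>t. [t]) ` bounded_trees k n"
proof (intro set_eqI iffI)
  fix ts assume "ts \<in> strip_forests k (2 * n) 0"
  then have ts: "in_strip k 0 ts" and len: "walk_length 0 ts = 2 * n"
    by (auto simp: strip_forests_def)
  then obtain t where "ts = [t]" by (cases ts) (auto split: if_splits)
  with ts len show "ts \<in> (\<lambda>t. [t]) ` bounded_trees k n"
    by (auto simp: bounded_trees_def walk_length_def)
qed (auto simp: bounded_trees_def strip_forests_def walk_length_def)

lemma finite_bounded_trees: "finite (bounded_trees k n)"
  using finite_strip_forests[of k "2 * n" 0]
  by (auto simp: strip_forests_singletons inj_on_def dest: finite_imageD)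

definition strip_sum :: "nat \<Rightarrow> nat \<Rightarrow> real" where
  "strip_sum n m = 2 / real m *
     (\<Sum>j=1..m-1. sin (real j * pi / real m)^2 * cos (real j * pi / real m)^(2 * n))"

text \<open>A tree with \<open>n\<close> edges is a Dyck path of length \<open>2 n\<close>, so \<open>strip_sum n (k + 2)\<close> is the
  proportion of these paths that never exceed level \<open>k\<close>.\<close>

lemma card_bounded_trees: "real (card (bounded_trees k n)) = 4^n * strip_sum n (k + 2)"
proof -
  have four_pow: "(2 * c)^(2 * n) = 4^n * c^(2 * n)" for c :: real
    by (simp add: power_mult_distrib power_mult)
  have "card (bounded_trees k n) = card (strip_forests k (2 * n) 0)"
    unfolding strip_forests_singletons by (rule card_image[symmetric]) (auto simp: inj_on_def)
  also have "real \<dots> = strip_walks k (2 * n) 1"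
    using card_strip_forests[of 0 k "2 * n"] by simp
  also have "\<dots> = 2 / real (k + 2) * (\<Sum>j=1..k+1. 4^n *
      (sin (real j * pi / real (k + 2))^2 * cos (real j * pi / real (k + 2))^(2 * n)))"
    unfolding strip_walks_def Let_def four_pow
    by (simp add: power2_eq_square mult_ac)
  also have "\<dots> = 4^n * strip_sum n (k + 2)"
    by (simp add: strip_sum_def sum_distrib_left[symmetric] mult_ac)
  finally show ?thesis .
qed

lemma height_le_edges: "height t \<le> edges t"
proof (induction t rule: height.induct)
  case (1 ts)
  have "Suc (height t) \<le> edges (Node ts)" if "t \<in> set ts" for t
  proof -
    have "Suc (height t) \<le> Suc (edges t)" using 1 that by simp
    also have "\<dots> \<le> sum_list (map (\<lambda>t. Suc (edges t)) ts)"
      using that by (intro member_le_sum_list) auto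
    finally show ?thesis by simp
  qed
  then show ?case by (auto simp: Max_le_iff)
qed

lemma planted_trees_Suc: "planted_trees (Suc n) = (\<lambda>t. Node [t]) ` bounded_trees n n"
  using height_le_edges by (auto simp: planted_trees_def bounded_trees_def)

lemma exp_height_telescope:
  fixes \<mu> :: real
  assumes "h \<le> n"
  shows "exp (- \<mu> * real (h + 1)) =
    (exp \<mu> - 1) * (\<Sum>k<n. if h \<le> k then exp (- \<mu> * real (k + 2)) else 0) + exp (- \<mu> * real (n + 1))"
  using assms
proof (induction n rule: dec_induct)
  case (step n)
  have "exp (- \<mu> * real (n + 1)) = (exp \<mu> - 1) * exp (- \<mu> * real (n + 2)) + exp (- \<mu> * real (n + 2))"
    by (simp add: algebra_simps flip: exp_add)
  with step show ?case by (simp add: algebra_simps)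
qed simp

text \<open>Summation by parts over the height.\<close>

lemma Z_Suc_bounded_trees:
  "Z \<mu> (Suc n) = (exp \<mu> - 1) * (\<Sum>k<n. exp (- \<mu> * real (k + 2)) * real (card (bounded_trees k n)))
      + exp (- \<mu> * real (n + 1)) * real (card (bounded_trees n n))"
proof -
  let ?T = "bounded_trees n n"
  have level: "(\<Sum>t\<in>?T. if height t \<le> k then exp (- \<mu> * real (k + 2)) else 0)
      = exp (- \<mu> * real (k + 2)) * real (card (bounded_trees k n))" if "k < n" for k
  proof -
    have "{t \<in> ?T. height t \<le> k} = bounded_trees k n"
      using that by (auto simp: bounded_trees_def)
    then show ?thesis by (simp add: sum.If_cases finite_bounded_trees Int_def conj_commute)
  qed
  let ?d = "\<lambda>t k. if height t \<le> k then exp (- \<mu> * real (k + 2)) else 0"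
  have "Z \<mu> (Suc n) = (\<Sum>t\<in>?T. exp (- \<mu> * real (height t + 1)))"
    unfolding Z_def planted_trees_Suc by (subst sum.reindex) (auto simp: inj_on_def)
  also have "\<dots> = (\<Sum>t\<in>?T. (exp \<mu> - 1) * (\<Sum>k<n. ?d t k) + exp (- \<mu> * real (n + 1)))"
  proof (rule sum.cong[OF refl])
    fix t assume "t \<in> ?T"
    then have "height t \<le> n" by (simp add: bounded_trees_def)
    from exp_height_telescope[OF this]
    show "exp (- \<mu> * real (height t + 1)) = (exp \<mu> - 1) * (\<Sum>k<n. ?d t k) + exp (- \<mu> * real (n + 1))" .
  qed
  also have "\<dots> = (exp \<mu> - 1) * (\<Sum>t\<in>?T. \<Sum>k<n. ?d t k) + exp (- \<mu> * real (n + 1)) * real (card ?T)"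
    by (simp add: sum.distrib sum_distrib_left mult.commute)
  also have "(\<Sum>t\<in>?T. \<Sum>k<n. ?d t k) = (\<Sum>k<n. \<Sum>t\<in>?T. ?d t k)"
    by (rule sum.swap)
  also have "\<dots> = (\<Sum>k<n. exp (- \<mu> * real (k + 2)) * real (card (bounded_trees k n)))"
    by (rule sum.cong) (simp_all add: level)
  finally show ?thesis .
qed

lemma Z_Suc_strip_sums:
  "Z \<mu> (Suc n) = (exp \<mu> - 1) * 4^n * (\<Sum>m\<in>{2..n+1}. exp (- \<mu> * real m) * strip_sum n m)
     + exp (- \<mu> * real (n + 1)) * 4^n * strip_sum n (n + 2)"
proof -
  have "Z \<mu> (Suc n) = (exp \<mu> - 1) * 4^n * (\<Sum>k<n. exp (- \<mu> * real (k + 2)) * strip_sum n (k + 2))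
      + exp (- \<mu> * real (n + 1)) * 4^n * strip_sum n (n + 2)"
    unfolding Z_Suc_bounded_trees card_bounded_trees by (simp add: sum_distrib_left mult_ac)
  also have "(\<Sum>k<n. exp (- \<mu> * real (k + 2)) * strip_sum n (k + 2))
      = (\<Sum>m\<in>{2..n+1}. exp (- \<mu> * real m) * strip_sum n m)"
    by (rule sum.reindex_bij_witness[where i="\<lambda>m. m - 2" and j="\<lambda>k. k + 2"]) auto
  finally show ?thesis .
qed

section \<open>Estimates for the strip sums\<close>

lemma cos_le_taylor4: "cos (x::real) \<le> 1 - x^2/2 + x^4/24"
proof -
  obtain t where t: "cos x = (\<Sum>m<4. cos_coeff m * x ^ m) + (cos (t + 1/2 * real 4 * pi) / fact 4) * x ^ 4"
    using Maclaurin_cos_expansion[of x 4] by blast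
  have s: "(\<Sum>m<4. cos_coeff m * x ^ m) = 1 - x^2/2"
    by (simp add: cos_coeff_def eval_nat_numeral) presburger
  have c: "cos (t + 1/2 * real 4 * pi) = cos t"
    by (simp add: cos_add)
  have "cos t * x^4 \<le> x^4" using mult_right_mono[OF cos_le_one, of "x^4" t] by simp
  then show ?thesis using t s c by (simp add: fact_numeral)
qed

lemma cos_ge_taylor2: "1 - x^2/2 \<le> cos (x::real)"
proof -
  obtain t where t: "cos x = (\<Sum>m<2. cos_coeff m * x ^ m) + (cos (t + 1/2 * real 2 * pi) / fact 2) * x ^ 2"
    using Maclaurin_cos_expansion[of x 2] by blast
  have s: "(\<Sum>m<2. cos_coeff m * x ^ m) = 1"
    by (simp add: cos_coeff_def eval_nat_numeral)
  have c: "cos (t + 1/2 * real 2 * pi) = - cos t"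
    by (simp add: cos_add)
  have "cos t * x^2 \<le> x^2" using mult_right_mono[OF cos_le_one, of "x^2" t] by simp
  then show ?thesis using t s c by simp
qed

lemma sin_ge_taylor3: "0 \<le> (x::real) \<Longrightarrow> x - x^3/6 \<le> sin x"
proof -
  assume x: "0 \<le> x"
  obtain t where t: "sin x = (\<Sum>m<3. sin_coeff m * x ^ m) + (sin (t + 1/2 * real 3 * pi) / fact 3) * x ^ 3"
    using Maclaurin_sin_expansion[of x 3] by blast
  have s: "(\<Sum>m<3. sin_coeff m * x ^ m) = x"
    by (simp add: sin_coeff_def eval_nat_numeral)
  have c: "sin (t + 1/2 * real 3 * pi) = - cos t"
  proof -
    have e: "t + 1/2 * real 3 * pi = (t + pi/2) + pi" by simp
    have "sin ((t + pi/2) + pi) = - cos t" by (simp only: sin_periodic_pi) (simp add: sin_add)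
    then show ?thesis by (simp only: e)
  qed
  have "cos t * x^3 \<le> x^3" using mult_right_mono[OF cos_le_one, of "x^3" t] x by simp
  then show ?thesis using t s c by (simp add: fact_numeral)
qed

lemma exp_minus_ge_taylor3: "0 \<le> (y::real) \<Longrightarrow> 1 - y + y^2/2 - y^3/6 \<le> exp (- y)"
proof -
  assume y: "0 \<le> y"
  obtain t where t: "exp (-y) = (\<Sum>m<4. (-y) ^ m / fact m) + (exp t / fact 4) * (-y) ^ 4"
    using Maclaurin_exp_le[of "-y" 4] by blast
  have s: "(\<Sum>m<4. (-y) ^ m / fact m) = 1 - y + y^2/2 - y^3/6"
    by (simp add: eval_nat_numeral fact_numeral)
  have "0 \<le> (exp t / fact 4) * (-y) ^ 4" by simp
  then show ?thesis using t s by linarith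
qed

lemma pi_squared_less_16: "pi^2 < 16"
proof -
  have "pi^2 < 4^2" using pi_less_4 pi_gt_zero by (intro power_strict_mono) auto
  then show ?thesis by simp
qed

lemma cos_le_exp_half_square: assumes "0 \<le> x" "x \<le> pi/2" shows "cos x \<le> exp (- (x^2/2))"
proof -
  define y where "y = x^2/2"
  have y0: "0 \<le> y" by (simp add: y_def)
  have "x^2 \<le> (pi/2)^2" using assms by (intro power_mono) auto
  then have y2: "y \<le> 2" using pi_squared_less_16 by (simp add: y_def power_divide)
  have "cos x \<le> 1 - y + y^2/6" using cos_le_taylor4[of x] by (simp add: y_def power2_eq_square eval_nat_numeral)
  also have "\<dots> \<le> 1 - y + y^2/2 - y^3/6"
  proof -
    have "y^3 \<le> 2 * y^2" using mult_right_mono[OF y2, of "y*y"] y0 by (simp add: power3_eq_cube power2_eq_square)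
    then show ?thesis by simp
  qed
  also have "\<dots> \<le> exp (-y)" using exp_minus_ge_taylor3[OF y0] .
  finally show ?thesis by (simp add: y_def)
qed

lemma cos_square_le_exp: assumes "0 \<le> x" "x \<le> pi/2" shows "cos x ^ 2 \<le> exp (- (x^2))"
proof -
  have c0: "0 \<le> cos x" using assms by (intro cos_ge_zero) auto
  have "cos x ^ 2 \<le> exp (- (x^2/2)) ^ 2" using cos_le_exp_half_square[OF assms] c0 by (intro power_mono) auto
  also have "\<dots> = exp (- (x^2))" by (simp add: power2_eq_square mult_exp_exp)
  finally show ?thesis .
qed

lemma cos_power_le_exp: assumes "0 \<le> x" "x \<le> pi/2" shows "cos x ^ (2*n) \<le> exp (- real n * x^2)"
proof -
  have "cos x ^ (2*n) = (cos x ^ 2) ^ n" by (simp add: power_mult)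
  also have "\<dots> \<le> exp (- (x^2)) ^ n" using cos_square_le_exp[OF assms] by (intro power_mono) auto
  also have "\<dots> = exp (- real n * x^2)" by (simp add: exp_of_nat_mult[symmetric])
  finally show ?thesis .
qed

lemma cos_power_ge_exp: assumes "0 \<le> x" "x \<le> 1" shows "exp (- real n * x^2 - real n * x^4) \<le> cos x ^ (2*n)"
proof -
  define y where "y = x^2/2"
  have y0: "0 \<le> y" by (simp add: y_def)
  have "x^2 \<le> 1" using assms by (simp add: power_le_one)
  then have y1: "y \<le> 1/2" by (simp add: y_def)
  have "- y - 2 * y^2 \<le> ln (1 - y)" using ln_one_minus_pos_lower_bound[OF y0 y1] .
  moreover have "0 < 1 - y" using y1 by simp
  ultimately have "exp (- y - 2 * y^2) \<le> 1 - y"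
    by (metis exp_le_cancel_iff exp_ln)
  also have "1 - y \<le> cos x" using cos_ge_taylor2[of x] by (simp add: y_def)
  finally have e: "exp (- y - 2 * y^2) \<le> cos x" .
  have "exp (- real n * x^2 - real n * x^4) = exp (- y - 2 * y^2) ^ (2*n)"
    by (simp add: exp_of_nat_mult[symmetric] y_def power2_eq_square eval_nat_numeral algebra_simps)
  also have "\<dots> \<le> cos x ^ (2*n)" using e by (intro power_mono) auto
  finally show ?thesis .
qed

definition strip_summand :: "nat \<Rightarrow> nat \<Rightarrow> nat \<Rightarrow> real" where
  "strip_summand n m j = sin (real j * pi / real m)^2 * cos (real j * pi / real m)^(2*n)"

lemma strip_sum_eq_summands: "strip_sum n m = 2 / real m * (\<Sum>j=1..m-1. strip_summand n m j)"
  by (simp add: strip_sum_def strip_summand_def)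

lemma strip_summand_nonneg: "0 \<le> strip_summand n m j"
  by (simp add: strip_summand_def power_mult)

lemma strip_summand_reflect: assumes "m \<ge> 1" shows "strip_summand n m (m - 1) = strip_summand n m 1"
proof -
  have e: "real (m-1) * pi / real m = pi - pi / real m" using assms
    by (simp add: of_nat_diff field_simps)
  have "cos (pi - pi / real m)^(2*n) = cos (pi / real m)^(2*n)"
    by (simp add: power_mult)
  then show ?thesis unfolding strip_summand_def e by simp
qed

lemma strip_summand_1_upper: assumes "m \<ge> 2" shows "strip_summand n m 1 \<le> (pi / real m)^2 * exp (- real n * (pi / real m)^2)"
proof -
  have x0: "0 \<le> pi / real m" by simp
  have x2: "pi / real m \<le> pi / 2" using assms by (intro divide_left_mono) auto
  have "sin (pi / real m)^2 \<le> (pi / real m)^2"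
  proof -
    have "pi / real m \<le> pi" using x2 pi_gt_zero by linarith
    then show ?thesis using sin_x_le_x[OF x0] sin_ge_zero[of "pi / real m"] by (intro power_mono) auto
  qed
  moreover have "cos (pi / real m)^(2*n) \<le> exp (- real n * (pi / real m)^2)"
    using cos_power_le_exp[OF x0 x2] .
  ultimately show ?thesis unfolding strip_summand_def
    by (intro mult_mono) (auto simp: power_mult)
qed

lemma strip_summand_middle_upper: assumes "m \<ge> 4" "2 \<le> j" "j \<le> m - 2"
  shows "strip_summand n m j \<le> exp (- real n * (2 * pi / real m)^2)"
proof -
  define y where "y = 2 * pi / real m"
  define x where "x = real j * pi / real m"
  have y0: "0 \<le> y" by (simp add: y_def)
  have y2: "y \<le> pi / 2" using assms(1) by (simp add: y_def field_simps)
  have xy: "y \<le> x" using assms(2) by (simp add: x_def y_def divide_right_mono)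
  have "real j \<le> real m - 2" using assms by linarith
  then have "real j * pi \<le> (real m - 2) * pi" by (intro mult_right_mono) auto
  then have xy2: "x \<le> pi - y" using assms(1) by (simp add: x_def y_def field_simps)
  have cx: "cos x ^ 2 \<le> cos y ^ 2"
  proof (cases "x \<le> pi/2")
    case True
    have "cos x \<le> cos y" using xy True y0 by (intro cos_monotone_0_pi_le) auto
    moreover have "0 \<le> cos x" using True xy y0 by (intro cos_ge_zero) auto
    ultimately show ?thesis by (intro power_mono) auto
  next
    case False
    have "cos x = - cos (pi - x)" by simp
    moreover have "cos (pi - x) \<le> cos y" using xy2 False y0 by (intro cos_monotone_0_pi_le) auto
    moreover have "0 \<le> cos (pi - x)" using False xy2 y0 by (intro cos_ge_zero) auto
    ultimately have "(- cos x)^2 \<le> cos y ^ 2" by (intro power_mono) auto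
    then show ?thesis by simp
  qed
  have "strip_summand n m j = sin x ^ 2 * (cos x ^ 2) ^ n" by (simp add: strip_summand_def x_def power_mult)
  also have "\<dots> \<le> 1 * (cos y ^ 2) ^ n"
  proof -
    have "(cos x ^ 2) ^ n \<le> (cos y ^ 2) ^ n" using cx by (rule power_mono) simp
    moreover have "sin x ^ 2 \<le> 1" by (simp add: abs_square_le_1)
    ultimately show ?thesis by (intro mult_mono) auto
  qed
  also have "\<dots> = cos y ^ (2*n)" by (simp add: power_mult)
  also have "\<dots> \<le> exp (- real n * y^2)" by (rule cos_power_le_exp[OF y0 y2])
  finally show ?thesis by (simp add: y_def)
qed

lemma sum_strip_summands_split:
  assumes "m \<ge> 3"
  shows "(\<Sum>j=1..m-1. strip_summand n m j) = 2 * strip_summand n m 1 + (\<Sum>j=2..m-2. strip_summand n m j)"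
proof -
  have split: "{1..m-1} = insert 1 (insert (m - 1) {2..m-2})" using assms by auto
  have "(\<Sum>j=1..m-1. strip_summand n m j)
      = strip_summand n m 1 + (strip_summand n m (m - 1) + (\<Sum>j=2..m-2. strip_summand n m j))"
    unfolding split using assms by (subst sum.insert; auto)+
  then show ?thesis using strip_summand_reflect[of m n] assms by simp
qed

lemma strip_sum_upper: assumes "m \<ge> 2"
  shows "strip_sum n m \<le> 4 * pi^2 / real m^3 * exp (- real n * (pi / real m)^2) + 2 * exp (- real n * (2 * pi / real m)^2)"
proof -
  define E1 where "E1 = exp (- real n * (pi / real m)^2)"
  define E4 where "E4 = exp (- real n * (2 * pi / real m)^2)"
  have m0: "real m > 0" using assms by simp
  have first_term: "strip_summand n m 1 \<le> (pi / real m)^2 * E1" using strip_summand_1_upper[OF assms] by (simp add: E1_def)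
  have key: "4 * pi^2 / real m^3 * E1 = 2 / real m * (2 * ((pi / real m)^2 * E1))"
    using m0 by (simp add: field_simps power2_eq_square power3_eq_cube)
  have E4p: "0 \<le> E4" by (simp add: E4_def)
  show ?thesis
  proof (cases "m = 2")
    case True
    have "strip_sum n m = strip_summand n m 1" using True by (simp add: strip_sum_eq_summands)
    also have "\<dots> \<le> 2 / real m * (2 * ((pi / real m)^2 * E1))" using first_term True strip_summand_nonneg[of n m 1]
      by (simp add: E1_def)
    finally have "strip_sum n m \<le> 4 * pi^2 / real m^3 * E1" using key by simp
    then have "strip_sum n m \<le> 4 * pi^2 / real m^3 * E1 + 2 * E4" using E4p by linarith
    then show ?thesis by (simp add: E1_def E4_def)
  next
    case False
    then have m3: "m \<ge> 3" using assms by simp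
    have "(\<Sum>j=1..m-1. strip_summand n m j) = 2 * strip_summand n m 1 + (\<Sum>j=2..m-2. strip_summand n m j)"
      by (rule sum_strip_summands_split[OF m3])
    also have "(\<Sum>j=2..m-2. strip_summand n m j) \<le> (\<Sum>j=2..m-2. E4)"
    proof (rule sum_mono)
      fix j assume j: "j \<in> {2..m-2}"
      then have "m \<ge> 4" by auto
      then show "strip_summand n m j \<le> E4" using strip_summand_middle_upper[of m j n] j by (auto simp: E4_def)
    qed
    also have "(\<Sum>j=2..m-2. E4) \<le> real m * E4" using E4p by (simp add: mult_right_mono)
    finally have "(\<Sum>j=1..m-1. strip_summand n m j) \<le> 2 * ((pi / real m)^2 * E1) + real m * E4" using first_term by linarith
    then have "strip_sum n m \<le> 2 / real m * (2 * ((pi / real m)^2 * E1) + real m * E4)"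
      unfolding strip_sum_eq_summands using m0 by (intro mult_left_mono) auto
    also have "\<dots> = 4 * pi^2 / real m^3 * E1 + 2 * E4" using key m0 by (simp add: field_simps)
    finally show ?thesis by (simp add: E1_def E4_def)
  qed
qed

lemma strip_sum_lower: assumes "m \<ge> 4"
  shows "4 / real m * ((pi / real m)^2 * (1 - (pi / real m)^2 / 6)^2 * exp (- real n * (pi / real m)^2 - real n * (pi / real m)^4)) \<le> strip_sum n m"
proof -
  define x where "x = pi / real m"
  have m0: "real m > 0" using assms by simp
  have x0: "0 \<le> x" by (simp add: x_def)
  have x1: "x \<le> 1"
  proof -
    have "pi \<le> real m" using pi_less_4 assms by linarith
    then show ?thesis using m0 by (simp add: x_def)
  qed
  have "x^2 \<le> 1" using x0 x1 by (simp add: power_le_one)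
  then have s1: "0 \<le> x * (1 - x^2/6)" using x0 by simp
  have "x * (1 - x^2/6) \<le> sin x" using sin_ge_taylor3[OF x0] by (simp add: algebra_simps power3_eq_cube power2_eq_square)
  then have sinb: "x^2 * (1 - x^2/6)^2 \<le> sin x ^ 2" using s1 by (metis power_mono power_mult_distrib)
  have cosb: "exp (- real n * x^2 - real n * x^4) \<le> cos x ^ (2*n)" by (rule cos_power_ge_exp[OF x0 x1])
  have A: "x^2 * (1 - x^2/6)^2 * exp (- real n * x^2 - real n * x^4) \<le> strip_summand n m 1"
    unfolding strip_summand_def using sinb cosb by (simp add: x_def) (intro mult_mono; simp)
  have "2 * strip_summand n m 1 \<le> (\<Sum>j=1..m-1. strip_summand n m j)"
    using sum_strip_summands_split[of m n] assms strip_summand_nonneg by (simp add: sum_nonneg)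
  then have "2 / real m * (2 * strip_summand n m 1) \<le> strip_sum n m" unfolding strip_sum_eq_summands using m0 by (intro mult_left_mono) auto
  moreover have "4 / real m * (x^2 * (1 - x^2/6)^2 * exp (- real n * x^2 - real n * x^4)) \<le> 4 / real m * strip_summand n m 1"
    using A m0 by (intro mult_left_mono) auto
  ultimately show ?thesis unfolding x_def[symmetric] by simp
qed

lemma strip_sum_nonneg: "0 \<le> strip_sum n m"
  unfolding strip_sum_eq_summands by (intro mult_nonneg_nonneg sum_nonneg strip_summand_nonneg) auto

lemma strip_summand_le_1: "strip_summand n m j \<le> 1"
proof -
  have "sin (real j * pi / real m)^2 \<le> 1" by (simp add: abs_square_le_1)
  moreover have "cos (real j * pi / real m)^(2*n) \<le> 1"
    by (simp add: power_mult abs_square_le_1 power_le_one)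
  ultimately show ?thesis unfolding strip_summand_def by (intro mult_le_one) (auto simp: power_mult)
qed

lemma strip_sum_le_2: "strip_sum n m \<le> 2"
proof (cases "m = 0")
  case True then show ?thesis by (simp add: strip_sum_eq_summands)
next
  case False
  have "(\<Sum>j=1..m-1. strip_summand n m j) \<le> (\<Sum>j=1..m-1. 1)" by (intro sum_mono strip_summand_le_1)
  also have "\<dots> \<le> real m" by simp
  finally have "2 / real m * (\<Sum>j=1..m-1. strip_summand n m j) \<le> 2 / real m * real m" using False by (intro mult_left_mono) auto
  then show ?thesis using False by (simp add: strip_sum_eq_summands)
qed

section \<open>Sums of Gaussians\<close>

lemma gaussian_has_integral_half_line: "((\<lambda>x::real. exp (- (x^2))) has_integral (sqrt pi / 2)) {0..}"
proof -
  have "has_bochner_integral lborel (\<lambda>x::real. indicator {0..} x *\<^sub>R exp (- x\<^sup>2)) (sqrt pi / 2)"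
    by (rule gaussian_moment_0)
  then have "integrable lborel (\<lambda>x::real. indicator {0..} x *\<^sub>R exp (- x\<^sup>2))"
    and "integral\<^sup>L lborel (\<lambda>x::real. indicator {0..} x *\<^sub>R exp (- x\<^sup>2)) = sqrt pi / 2"
    using has_bochner_integral_iff by blast+
  then have "((\<lambda>x::real. indicator {0..} x *\<^sub>R exp (- x\<^sup>2)) has_integral (sqrt pi / 2)) UNIV"
    using has_integral_integral_lborel by metis
  then have "((\<lambda>x::real. if x \<in> {0..} then exp (- x\<^sup>2) else 0) has_integral (sqrt pi / 2)) UNIV"
    by (rule has_integral_eq[rotated]) (simp add: indicator_def)
  then show ?thesis by (subst has_integral_restrict_UNIV[symmetric]) simp
qed

abbreviation gauss :: "real \<Rightarrow> real" where "gauss x \<equiv> exp (- (x^2))"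

lemma gauss_antimono: "0 \<le> x \<Longrightarrow> x \<le> y \<Longrightarrow> gauss y \<le> gauss x"
  by (simp add: power_mono)

lemma gauss_integrable: "gauss integrable_on {a..b}"
  by (intro integrable_continuous_interval continuous_intros)

lemma gauss_le_exp_tangent: "gauss x \<le> exp (D^2) * exp (- (2 * D) * x)"
proof -
  have "- (x^2) \<le> D^2 + - (2 * D) * x"
    using zero_le_power2[of "x - D"] by (simp add: power2_eq_square algebra_simps)
  then show ?thesis by (simp flip: exp_add)
qed

text \<open>The Gaussian tail beyond \<open>D\<close> is bounded by the integral of the tangent majorant.\<close>

lemma gauss_integral_truncated_lower:
  assumes D: "D > 0"
  shows "sqrt pi / 2 - exp (- (D^2)) / (2 * D) \<le> integral {0..D} gauss"
proof -
  define k where "k x = (if x \<le> D then gauss x else exp (D^2) * exp (- (2 * D) * x))" for x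
  have "(k has_integral integral {0..D} gauss) {0..D}"
    by (rule has_integral_eq[OF _ integrable_integral[OF gauss_integrable]]) (simp add: k_def)
  moreover have "(k has_integral exp (- (D^2)) / (2 * D)) {D..}"
  proof (rule has_integral_eq)
    have tail: "exp (D^2) * (exp (- (2 * D) * D) / (2 * D)) = exp (- (D^2)) / (2 * D)"
      by (simp add: power2_eq_square flip: exp_add)
    have "((\<lambda>x. exp (D^2) * exp (- (2 * D) * x)) has_integral exp (D^2) * (exp (- (2 * D) * D) / (2 * D))) {D..}"
      using D by (intro has_integral_mult_right has_integral_exp_minus_to_infinity) simp
    then show "((\<lambda>x. exp (D^2) * exp (- (2 * D) * x)) has_integral exp (- (D^2)) / (2 * D)) {D..}"
      unfolding tail .
    show "exp (D^2) * exp (- (2 * D) * x) = k x" if "x \<in> {D..}" for x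
      using that by (auto simp: k_def power2_eq_square simp flip: exp_add)
  qed
  moreover have "{0..D} \<inter> {D..} = {D}" "{0..D} \<union> {D..} = {0..}" using D by auto
  ultimately have "(k has_integral (integral {0..D} gauss + exp (- (D^2)) / (2 * D))) {0..}"
    using has_integral_Un[of k _ "{0..D}" _ "{D..}"] by fastforce
  moreover have "gauss x \<le> k x" for x
    using gauss_le_exp_tangent[of x D] by (simp add: k_def)
  ultimately show ?thesis
    using has_integral_le[OF gaussian_has_integral_half_line] by fastforce
qed

lemma gauss_integral_step_bounds:
  assumes "0 \<le> a" "0 < d"
  shows "d * gauss (a + d) \<le> integral {a..a+d} gauss" and "integral {a..a+d} gauss \<le> d * gauss a"
proof -
  have "integral {a..a+d} (\<lambda>_. gauss (a+d)) \<le> integral {a..a+d} gauss"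
    using assms by (intro integral_le gauss_integrable) (auto intro: gauss_antimono)
  then show "d * gauss (a + d) \<le> integral {a..a+d} gauss" using assms by simp
  have "integral {a..a+d} gauss \<le> integral {a..a+d} (\<lambda>_. gauss a)"
    using assms by (intro integral_le gauss_integrable) (auto intro: gauss_antimono)
  then show "integral {a..a+d} gauss \<le> d * gauss a" using assms by simp
qed

lemma gauss_right_riemann_sum_le:
  assumes "0 < d" "0 \<le> s"
  shows "d * (\<Sum>k=1..K. gauss (s + real k * d)) \<le> integral {s..s + real K * d} gauss"
proof (induction K)
  case 0 then show ?case by simp
next
  case (Suc K)
  have split: "integral {s..s + real (Suc K) * d} gauss = integral {s..s + real K * d} gauss + integral {s + real K * d..s + real K * d + d} gauss"
  proof -
    have e: "s + real (Suc K) * d = s + real K * d + d" by (simp add: algebra_simps)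
    have "integral {s..s + real K * d} gauss + integral {s + real K * d..s + real (Suc K) * d} gauss = integral {s..s + real (Suc K) * d} gauss"
      using Henstock_Kurzweil_Integration.integral_combine[where a=s and c="s + real K * d" and b="s + real (Suc K) * d" and f=gauss] assms gauss_integrable by simp
    then show ?thesis unfolding e by simp
  qed
  have "d * gauss (s + real K * d + d) \<le> integral {s + real K * d..s + real K * d + d} gauss"
    using assms by (intro gauss_integral_step_bounds) auto
  then show ?case using Suc split by (simp add: algebra_simps)
qed

lemma gauss_integral_le_left_riemann_sum:
  assumes "0 < d" "0 \<le> s"
  shows "integral {s..s + real K * d} gauss \<le> d * (\<Sum>k<K. gauss (s + real k * d))"
proof (induction K)
  case 0 then show ?case by simp
next
  case (Suc K)
  have split: "integral {s..s + real (Suc K) * d} gauss = integral {s..s + real K * d} gauss + integral {s + real K * d..s + real K * d + d} gauss"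
  proof -
    have e: "s + real (Suc K) * d = s + real K * d + d" by (simp add: algebra_simps)
    have "integral {s..s + real K * d} gauss + integral {s + real K * d..s + real (Suc K) * d} gauss = integral {s..s + real (Suc K) * d} gauss"
      using Henstock_Kurzweil_Integration.integral_combine[where a=s and c="s + real K * d" and b="s + real (Suc K) * d" and f=gauss] assms gauss_integrable by simp
    then show ?thesis unfolding e by simp
  qed
  have "integral {s + real K * d..s + real K * d + d} gauss \<le> d * gauss (s + real K * d)"
    using assms by (intro gauss_integral_step_bounds) auto
  then show ?case using Suc split by (simp add: algebra_simps)
qed

lemma gauss_integrable_half_line: "gauss integrable_on {0..}" using gaussian_has_integral_half_line by blast

lemma exp_scaled_square_eq_gauss: "a > 0 \<Longrightarrow> exp (- a * (s + real k)^2) = gauss (sqrt a * s + real k * sqrt a)"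
proof -
  assume a: "a > 0"
  have "(sqrt a * s + real k * sqrt a)^2 = (sqrt a)^2 * (s + real k)^2" by (simp add: power2_eq_square algebra_simps)
  also have "\<dots> = a * (s + real k)^2" using a by simp
  finally show ?thesis by simp
qed

lemma gauss_lattice_sum_upper:
  assumes a: "a > 0" and s: "0 \<le> s"
  shows "(\<Sum>k\<le>K. exp (- a * (s + real k)^2)) \<le> 1 + sqrt (pi / a) / 2"
proof -
  define d where "d = sqrt a"
  have d: "d > 0" using a by (simp add: d_def)
  have "(\<Sum>k\<le>K. exp (- a * (s + real k)^2)) = (\<Sum>k\<le>K. gauss (d * s + real k * d))"
    using exp_scaled_square_eq_gauss[OF a] by (simp add: d_def)
  also have "\<dots> = gauss (d * s) + (\<Sum>k=1..K. gauss (d * s + real k * d))"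
  proof -
    have "{..K} = insert 0 {1..K}" by auto
    then show ?thesis by simp
  qed
  also have "(\<Sum>k=1..K. gauss (d * s + real k * d)) \<le> integral {d * s .. d * s + real K * d} gauss / d"
    using gauss_right_riemann_sum_le[OF d, of "d * s" K] d s by (simp add: field_simps)
  also have "integral {d * s .. d * s + real K * d} gauss \<le> integral {0..} gauss"
    using d s by (intro integral_subset_le gauss_integrable gauss_integrable_half_line) auto
  also have "integral {0..} gauss = sqrt pi / 2" using gaussian_has_integral_half_line by (rule integral_unique)
  finally have "(\<Sum>k\<le>K. exp (- a * (s + real k)^2)) \<le> gauss (d * s) + sqrt pi / 2 / d"
    using d by (simp add: divide_right_mono)
  moreover have "gauss (d * s) \<le> 1" by simp
  moreover have "sqrt pi / 2 / d = sqrt (pi / a) / 2" by (simp add: d_def real_sqrt_divide)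
  ultimately show ?thesis by linarith
qed

lemma gauss_lattice_sum_lower:
  assumes a: "a > 0" and s: "0 \<le> s" "s \<le> 1" and w: "w > 0" "w \<le> s + real K + 1"
  shows "sqrt (pi / a) / 2 - exp (- a * w^2) / (2 * a * w) - 1 \<le> (\<Sum>k\<le>K. exp (- a * (s + real k)^2))"
proof -
  define d where "d = sqrt a"
  have d: "d > 0" using a by (simp add: d_def)
  have dd: "d * d = a" using a by (simp add: d_def)
  have eqS: "(\<Sum>k\<le>K. exp (- a * (s + real k)^2)) = (\<Sum>k<Suc K. gauss (d * s + real k * d))"
    using exp_scaled_square_eq_gauss[OF a] by (simp add: d_def lessThan_Suc_atMost)
  have "integral {d * s .. d * s + real (Suc K) * d} gauss \<le> d * (\<Sum>k<Suc K. gauss (d * s + real k * d))"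
    using gauss_integral_le_left_riemann_sum[OF d, of "d * s" "Suc K"] d s by simp
  moreover have "integral {0..d * s + real (Suc K) * d} gauss = integral {0..d * s} gauss + integral {d * s .. d * s + real (Suc K) * d} gauss"
    using Henstock_Kurzweil_Integration.integral_combine[where a=0 and c="d * s" and b="d * s + real (Suc K) * d" and f=gauss] d s gauss_integrable
    by simp
  moreover have "integral {0..d * s} gauss \<le> d"
  proof -
    have "integral {0..d * s} gauss \<le> integral {0..d * s} (\<lambda>_. 1)" by (intro integral_le gauss_integrable) auto
    also have "\<dots> = d * s" using d s by simp
    also have "\<dots> \<le> d" using d s by (simp add: mult_left_le)
    finally show ?thesis .
  qed
  moreover have "integral {0..d * w} gauss \<le> integral {0..d * s + real (Suc K) * d} gauss"
  proof -
    have "d * w \<le> d * (s + real K + 1)" using d w by simp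
    then have "d * w \<le> d * s + real (Suc K) * d" by (simp add: algebra_simps)
    then show ?thesis by (intro integral_subset_le gauss_integrable) auto
  qed
  moreover have "sqrt pi / 2 - exp (- ((d * w)^2)) / (2 * (d * w)) \<le> integral {0..d * w} gauss"
    using gauss_integral_truncated_lower[of "d * w"] d w by simp
  ultimately have "sqrt pi / 2 - exp (- ((d * w)^2)) / (2 * (d * w)) - d \<le> d * (\<Sum>k\<le>K. exp (- a * (s + real k)^2))"
    unfolding eqS by linarith
  then have "(sqrt pi / 2 - exp (- ((d * w)^2)) / (2 * (d * w)) - d) / d \<le> (\<Sum>k\<le>K. exp (- a * (s + real k)^2))"
    using d by (simp add: divide_le_eq mult.commute)
  moreover have "(sqrt pi / 2 - exp (- ((d * w)^2)) / (2 * (d * w)) - d) / d = sqrt (pi / a) / 2 - exp (- a * w^2) / (2 * a * w) - 1"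
  proof -
    have e1: "(d * w)^2 = a * w^2" using dd by (simp add: power2_eq_square algebra_simps)
    have e2: "exp (- (a * w^2)) / (2 * (d * w)) / d = exp (- a * w^2) / (2 * a * w)"
      using dd d by (simp add: field_simps)
    have e3: "sqrt pi / 2 / d = sqrt (pi / a) / 2" by (simp add: d_def real_sqrt_divide)
    have "(sqrt pi / 2 - exp (- ((d * w)^2)) / (2 * (d * w)) - d) / d
        = sqrt pi / 2 / d - exp (- ((d * w)^2)) / (2 * (d * w)) / d - 1"
      using d by (simp add: diff_divide_distrib)
    also have "\<dots> = sqrt (pi / a) / 2 - exp (- a * w^2) / (2 * a * w) - 1"
      unfolding e1 e3 using e2 by simp
    finally show ?thesis .
  qed
  ultimately show ?thesis by simp
qed

lemma nat_window_split:
  fixes c w :: real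
  assumes w: "w \<ge> 1" and c: "c \<ge> w + 1"
  defines "p \<equiv> nat \<lceil>c\<rceil>" and "P \<equiv> nat \<lfloor>c + w\<rfloor>" and "l \<equiv> nat \<lceil>c - w\<rceil>"
  shows "{m::nat. \<bar>real m - c\<bar> \<le> w} = {p..P} \<union> {l..p - 1}"
    and "{p..P} \<inter> {l..p - 1} = {}"
    and "real p - c \<ge> 0" "real p - c < 1" "w \<le> (real p - c) + real (P - p) + 1" "p \<le> P"
    and "c - real (p - 1) > 0" "c - real (p - 1) \<le> 1" "w \<le> (c - real (p - 1)) + real (p - 1 - l) + 1" "l \<le> p - 1"
proof -
  have c0: "c > 0" using w c by linarith
  have rp: "real p = real_of_int \<lceil>c\<rceil>" using c0 by (simp add: p_def)
  have rP: "real P = real_of_int \<lfloor>c + w\<rfloor>" using c0 w by (simp add: P_def)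
  have rl: "real l = real_of_int \<lceil>c - w\<rceil>" using c w by (simp add: l_def)
  have p1: "c \<le> real p" "real p < c + 1" using rp ceiling_correct[of c] by linarith+
  have P1: "real P \<le> c + w" "c + w < real P + 1" using rP floor_correct[of "c+w"] by linarith+
  have l1: "c - w \<le> real l" "real l < c - w + 1" using rl ceiling_correct[of "c - w"] by linarith+
  have pP: "p \<le> P"
  proof -
    have "real p < real P + 1" using p1 P1 w by linarith
    then show ?thesis by linarith
  qed
  have p1': "p \<ge> 1" using p1 c0 by (cases p) auto
  have rq: "real (p - 1) = real p - 1" using p1' by (simp add: of_nat_diff)
  have lq: "l \<le> p - 1"
  proof -
    have "real l < real p" using l1 p1 w by linarith
    then show ?thesis by linarith
  qed
  show "{m::nat. \<bar>real m - c\<bar> \<le> w} = {p..P} \<union> {l..p - 1}"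
  proof (intro set_eqI iffI)
    fix m assume "m \<in> {m::nat. \<bar>real m - c\<bar> \<le> w}"
    then have m: "c - w \<le> real m" "real m \<le> c + w" by auto
    show "m \<in> {p..P} \<union> {l..p - 1}"
    proof (cases "c \<le> real m")
      case True
      have "real p \<le> real m"
      proof -
        have "\<lceil>c\<rceil> \<le> int m" using True by (simp add: ceiling_le_iff)
        then show ?thesis using rp by linarith
      qed
      moreover have "real m \<le> real P"
      proof -
        have "int m \<le> \<lfloor>c + w\<rfloor>" using m by (simp add: le_floor_iff)
        then show ?thesis using rP by linarith
      qed
      ultimately show ?thesis by auto
    next
      case False
      have "real l \<le> real m"
      proof -
        have "\<lceil>c - w\<rceil> \<le> int m" using m by (simp add: ceiling_le_iff)
        then show ?thesis using rl by linarith
      qed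
      moreover have "real m < real p" using False p1 by linarith
      ultimately show ?thesis by auto
    qed
  next
    fix m assume "m \<in> {p..P} \<union> {l..p - 1}"
    then have "real m \<in> {real p..real P} \<or> real m \<in> {real l..real p - 1}"
      using rq by (auto simp del: of_nat_diff)
    then show "m \<in> {m::nat. \<bar>real m - c\<bar> \<le> w}" using p1 P1 l1 w by auto
  qed
  show "{p..P} \<inter> {l..p - 1} = {}" using p1' by auto
  show "real p - c \<ge> 0" "real p - c < 1" using p1 by auto
  show "w \<le> (real p - c) + real (P - p) + 1" using pP P1 by (simp add: of_nat_diff)
  show "p \<le> P" by (rule pP)
  show "c - real (p - 1) > 0" "c - real (p - 1) \<le> 1" using rq p1 by auto
  show "w \<le> (c - real (p - 1)) + real (p - 1 - l) + 1" using lq rq l1 by (simp add: of_nat_diff)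
  show "l \<le> p - 1" by (rule lq)
qed


lemma gauss_window_sum_bounds:
  fixes c w a :: real
  assumes a: "a > 0" and w: "w \<ge> 1" and c: "c \<ge> w + 1"
  shows "finite {m::nat. \<bar>real m - c\<bar> \<le> w}"
    and "(\<Sum>m\<in>{m::nat. \<bar>real m - c\<bar> \<le> w}. exp (- a * (real m - c)^2)) \<le> sqrt (pi / a) + 2"
    and "sqrt (pi / a) - exp (- a * w^2) / (a * w) - 2 \<le> (\<Sum>m\<in>{m::nat. \<bar>real m - c\<bar> \<le> w}. exp (- a * (real m - c)^2))"
proof -
  define p where "p = nat \<lceil>c\<rceil>"
  define P where "P = nat \<lfloor>c + w\<rfloor>"
  define l where "l = nat \<lceil>c - w\<rceil>"
  note ws = nat_window_split[OF w c, folded p_def P_def l_def]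
  define f where "f m = exp (- a * (real m - c)^2)" for m :: nat
  define s where "s = real p - c"
  define s' where "s' = c - real (p - 1)"
  show "finite {m::nat. \<bar>real m - c\<bar> \<le> w}" unfolding ws(1) by simp
  have sumW: "(\<Sum>m\<in>{m::nat. \<bar>real m - c\<bar> \<le> w}. f m) = (\<Sum>m\<in>{p..P}. f m) + (\<Sum>m\<in>{l..p-1}. f m)"
    unfolding ws(1) using ws(2) by (intro sum.union_disjoint) auto
  have R: "(\<Sum>m\<in>{p..P}. f m) = (\<Sum>k\<le>P - p. exp (- a * (s + real k)^2))"
  proof -
    have "(\<Sum>m\<in>{p..P}. f m) = (\<Sum>k\<in>{0..P - p}. f (p + k))"
      using sum.atLeastAtMost_shift_0[OF ws(6), of f] by (simp add: comp_def)
    also have "\<dots> = (\<Sum>k\<le>P - p. exp (- a * (s + real k)^2))"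
      by (simp add: f_def s_def atLeast0AtMost algebra_simps)
    finally show ?thesis .
  qed
  have L: "(\<Sum>m\<in>{l..p-1}. f m) = (\<Sum>k\<le>p - 1 - l. exp (- a * (s' + real k)^2))"
  proof -
    have "(\<Sum>m\<in>{l..p-1}. f m) = (\<Sum>k\<in>{0..p - 1 - l}. f (p - 1 - k))"
    proof (rule sum.reindex_bij_witness[where i="\<lambda>k. p - 1 - k" and j="\<lambda>m. p - 1 - m"])
      fix m assume "m \<in> {l..p - 1}"
      then have "p - 1 - (p - 1 - m) = m" by (intro diff_diff_cancel) simp
      then show "f (p - 1 - (p - 1 - m)) = f m" by (simp only:)
    qed (use ws(10) in auto)
    also have "\<dots> = (\<Sum>k\<in>{0..p - 1 - l}. exp (- a * (s' + real k)^2))"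
    proof (rule sum.cong[OF refl])
      fix k assume "k \<in> {0..p - 1 - l}"
      then have "k \<le> p - 1" by auto
      then have "real (p - 1 - k) = real (p - 1) - real k" by (simp add: of_nat_diff)
      then have "real (p - 1 - k) - c = - (s' + real k)" unfolding s'_def by linarith
      then have "(real (p - 1 - k) - c)^2 = (- (s' + real k))^2" by (simp only:)
      then have "(real (p - 1 - k) - c)^2 = (s' + real k)^2" by (simp only: power2_minus)
      then show "f (p - 1 - k) = exp (- a * (s' + real k)^2)" by (simp add: f_def)
    qed
    finally show ?thesis by (simp add: atLeast0AtMost)
  qed
  have s01: "0 \<le> s" "s \<le> 1" using ws(3,4) by (auto simp: s_def)
  have s'01: "0 \<le> s'" "s' \<le> 1" using ws(7,8) by (auto simp: s'_def)
  have w0: "w > 0" using w by simp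
  show "(\<Sum>m\<in>{m::nat. \<bar>real m - c\<bar> \<le> w}. exp (- a * (real m - c)^2)) \<le> sqrt (pi / a) + 2"
    using sumW R L gauss_lattice_sum_upper[OF a s01(1), of "P - p"] gauss_lattice_sum_upper[OF a s'01(1), of "p - 1 - l"]
    unfolding f_def by linarith
  have "w \<le> s + real (P - p) + 1" using ws(5) by (simp add: s_def)
  note h1 = gauss_lattice_sum_lower[OF a s01 w0 this]
  have "w \<le> s' + real (p - 1 - l) + 1" using ws(9) by (simp add: s'_def)
  note h2 = gauss_lattice_sum_lower[OF a s'01 w0 this]
  have "exp (- a * w^2) / (2 * a * w) + exp (- a * w^2) / (2 * a * w) = exp (- a * w^2) / (a * w)"
    by (simp add: field_simps)
  then show "sqrt (pi / a) - exp (- a * w^2) / (a * w) - 2 \<le> (\<Sum>m\<in>{m::nat. \<bar>real m - c\<bar> \<le> w}. exp (- a * (real m - c)^2))"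
    using sumW R L h1 h2 unfolding f_def by linarith
qed

section \<open>Laplace's method around the saddle point\<close>

lemma saddle_identity:
  fixes m m0 \<mu> P :: real
  assumes m: "m > 0" and h: "\<mu> * m0^3 = 2 * P"
  shows "P / m^2 + \<mu> * m = 3/2 * \<mu> * m0 + \<mu> * (m - m0)^2 * (m0 + 2*m) / (2 * m^2)"
proof -
  have P: "P = \<mu> * m0^3 / 2" using h by simp
  show ?thesis unfolding P using m
    by (simp add: field_simps power2_eq_square power3_eq_cube)
qed

lemma saddle_remainder_near:
  fixes m m0 \<mu> w :: real
  assumes mu: "\<mu> > 0" and m0: "m0 > 0" and w: "0 \<le> w" "w \<le> m0 / 2" and d: "\<bar>m - m0\<bar> \<le> w"
  shows "\<bar>\<mu> * (m - m0)^2 * (m0 + 2*m) / (2 * m^2) - 3 * \<mu> / (2 * m0) * (m - m0)^2\<bar> \<le> 11 * \<mu> * w^3 / m0^2"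
proof -
  have mlo: "m \<ge> m0 / 2" and mhi: "m \<le> 3 * m0 / 2" using d w by auto
  have mpos: "m > 0" using mlo m0 by linarith
  define e where "e = m - m0"
  have eq: "\<mu> * (m - m0)^2 * (m0 + 2*m) / (2 * m^2) - 3 * \<mu> / (2 * m0) * (m - m0)^2
      = - (\<mu> * e^3 * (m0 + 3*m) / (2 * m^2 * m0))"
    using mpos m0 by (simp add: e_def field_simps power2_eq_square power3_eq_cube)
  have ae: "\<bar>e\<bar> \<le> w" using d by (simp add: e_def)
  have "\<bar>\<mu> * e^3 * (m0 + 3*m) / (2 * m^2 * m0)\<bar> = \<mu> * \<bar>e\<bar>^3 * (m0 + 3*m) / (2 * m^2 * m0)"
    using mu mpos m0 by (simp add: abs_mult power_abs)
  also have "\<dots> \<le> \<mu> * w^3 * (m0 + 3*m) / (2 * m^2 * m0)"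
  proof -
    have "\<bar>e\<bar>^3 \<le> w^3" using ae by (intro power_mono) auto
    then show ?thesis using mu mpos m0 by (intro divide_right_mono mult_right_mono mult_left_mono) auto
  qed
  also have "\<dots> \<le> \<mu> * w^3 * (11/2 * m0) / (2 * (m0^2/4) * m0)"
  proof -
    have n1: "m0 + 3*m \<le> 11/2 * m0" using mhi by simp
    have n2: "m0^2/4 \<le> m^2"
    proof -
      have "(m0/2)^2 \<le> m^2" using mlo m0 by (intro power_mono) auto
      then show ?thesis by (simp add: power_divide)
    qed
    have p1: "0 \<le> \<mu> * w^3" using mu w by simp
    have "\<mu> * w^3 * (m0 + 3*m) / (2 * m^2 * m0) \<le> \<mu> * w^3 * (11/2 * m0) / (2 * m^2 * m0)"
      using n1 p1 mpos m0 by (intro divide_right_mono mult_left_mono) auto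
    also have "\<dots> \<le> \<mu> * w^3 * (11/2 * m0) / (2 * (m0^2/4) * m0)"
      using n2 p1 m0 mpos by (intro divide_left_mono mult_pos_pos mult_right_mono mult_left_mono) auto
    finally show ?thesis .
  qed
  also have "\<dots> = 11 * \<mu> * w^3 / m0^2" using m0 by (simp add: field_simps power2_eq_square)
  finally show ?thesis unfolding eq by simp
qed

lemma saddle_remainder_far:
  fixes m m0 \<mu> w :: real
  assumes mu: "\<mu> > 0" and m0: "m0 > 0" and m: "m > 0" and w: "0 \<le> w" "w \<le> m0 / 2" and d: "\<bar>m - m0\<bar> \<ge> w"
  shows "\<mu> * w^2 / (2 * m0) \<le> \<mu> * (m - m0)^2 * (m0 + 2*m) / (2 * m^2)"
proof (cases "m \<ge> m0")
  case True
  define e where "e = m - m0"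
  have e: "e \<ge> w" "e \<ge> 0" using d True by (auto simp: e_def)
  have mm: "m = m0 + e" by (simp add: e_def)
  have "w^2 * m^2 \<le> e^2 * (m0 * (m0 + 2*m))"
  proof -
    have "(w * m)^2 \<le> (e * (3/2 * m0))^2"
    proof (intro power_mono)
      have "w * m = w * m0 + w * e" by (simp add: mm algebra_simps)
      also have "\<dots> \<le> e * m0 + e * (m0/2)"
      proof (intro add_mono)
        show "w * m0 \<le> e * m0" using e m0 by (intro mult_right_mono) auto
        have "e * w \<le> e * (m0/2)" using e w by (intro mult_left_mono) auto
        then show "w * e \<le> e * (m0/2)" by (simp add: mult.commute)
      qed
      finally show "w * m \<le> e * (3/2 * m0)" by (simp add: algebra_simps)
      show "0 \<le> w * m" using w m by simp
    qed
    also have "\<dots> = e^2 * (9/4 * m0^2)" by (simp add: power2_eq_square)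
    also have "\<dots> \<le> e^2 * (m0 * (m0 + 2*m))"
    proof -
      have "9/4 * m0^2 \<le> m0 * (m0 + 2*m)" using True m0 by (simp add: power2_eq_square algebra_simps mult_left_mono)
      then show ?thesis by (intro mult_left_mono) auto
    qed
    finally show ?thesis by (simp add: power_mult_distrib)
  qed
  then have "w^2 / m0 \<le> e^2 * (m0 + 2*m) / m^2" using m0 m by (simp add: field_simps)
  then have "\<mu> * (w^2 / m0) / 2 \<le> \<mu> * (e^2 * (m0 + 2*m) / m^2) / 2" using mu by (intro divide_right_mono mult_left_mono) auto
  then show ?thesis by (simp add: e_def field_simps)
next
  case False
  have e: "(m0 - m) \<ge> w" using d False by auto
  have "w^2 \<le> (m - m0)^2"
  proof -
    have "w^2 \<le> (m0 - m)^2" using e w by (intro power_mono) auto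
    then show ?thesis by (simp add: power2_commute)
  qed
  moreover have "1 / m0 \<le> (m0 + 2*m) / m^2"
  proof -
    have "m * m \<le> m0 * m0" using False m m0 by (intro mult_mono) auto
    moreover have "0 \<le> m0 * (2 * m)" using m m0 by simp
    ultimately have "m^2 \<le> m0 * (m0 + 2*m)" by (simp add: power2_eq_square algebra_simps)
    then show ?thesis using m0 m by (simp add: field_simps)
  qed
  ultimately have "w^2 * (1 / m0) \<le> (m - m0)^2 * ((m0 + 2*m) / m^2)"
    using m0 by (intro mult_mono) auto
  then have "\<mu> * (w^2 * (1 / m0)) / 2 \<le> \<mu> * ((m - m0)^2 * ((m0 + 2*m) / m^2)) / 2" using mu by (intro divide_right_mono mult_left_mono) auto
  then show ?thesis by (simp add: field_simps)
qed

definition saddle_term :: "real \<Rightarrow> real \<Rightarrow> real \<Rightarrow> real" where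
  "saddle_term \<mu> P m = 4 * pi^2 / m^3 * exp (- (P / m^2 + \<mu> * m))"

lemma saddle_term_nonneg: "m > 0 \<Longrightarrow> 0 \<le> saddle_term \<mu> P m"
  by (simp add: saddle_term_def)

lemma saddle_term_split:
  assumes "m > 0" "\<mu> * m0^3 = 2 * P"
  shows "saddle_term \<mu> P m = 4 * pi^2 / m^3 * exp (- (3/2 * \<mu> * m0))
           * exp (- (\<mu> * (m - m0)^2 * (m0 + 2 * m) / (2 * m^2)))"
  unfolding saddle_term_def saddle_identity[OF assms] by (simp add: exp_add[symmetric] algebra_simps)

lemma saddle_term_near_upper:
  assumes mu: "\<mu> > 0" and m0: "m0 > 0" and h: "\<mu> * m0^3 = 2 * P"
    and w: "0 \<le> w" "w \<le> m0 / 2" and d: "\<bar>m - m0\<bar> \<le> w"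
  shows "saddle_term \<mu> P m \<le> 4 * pi^2 / (m0 - w)^3 * exp (- (3/2 * \<mu> * m0))
           * exp (11 * \<mu> * w^3 / m0^2) * exp (- (3 * \<mu> / (2 * m0)) * (m - m0)^2)"
proof -
  have mw: "m0 - w > 0" "m0 - w \<le> m" using w m0 d by auto
  have "saddle_term \<mu> P m = 4 * pi^2 / m^3 * exp (- (3/2 * \<mu> * m0))
      * exp (- (\<mu> * (m - m0)^2 * (m0 + 2 * m) / (2 * m^2)))"
    using saddle_term_split[OF _ h] mw by simp
  also have "\<dots> \<le> 4 * pi^2 / (m0 - w)^3 * exp (- (3/2 * \<mu> * m0))
      * (exp (- (3 * \<mu> / (2 * m0)) * (m - m0)^2) * exp (11 * \<mu> * w^3 / m0^2))"
  proof (intro mult_mono)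
    show "4 * pi^2 / m^3 \<le> 4 * pi^2 / (m0 - w)^3"
      using mw by (intro divide_left_mono power_mono) auto
    have "- (\<mu> * (m - m0)^2 * (m0 + 2 * m) / (2 * m^2))
        \<le> - (3 * \<mu> / (2 * m0)) * (m - m0)^2 + 11 * \<mu> * w^3 / m0^2"
      using saddle_remainder_near[OF mu m0 w d] by linarith
    then show "exp (- (\<mu> * (m - m0)^2 * (m0 + 2 * m) / (2 * m^2)))
        \<le> exp (- (3 * \<mu> / (2 * m0)) * (m - m0)^2) * exp (11 * \<mu> * w^3 / m0^2)"
      by (simp add: exp_add[symmetric])
  qed (use mw in auto)
  finally show ?thesis by (simp add: mult_ac)
qed

lemma saddle_term_far_upper:
  assumes mu: "\<mu> > 0" and m0: "m0 > 0" and h: "\<mu> * m0^3 = 2 * P"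
    and w: "0 \<le> w" "w \<le> m0 / 2" and m: "m \<ge> 2" and d: "\<bar>m - m0\<bar> \<ge> w"
  shows "saddle_term \<mu> P m \<le> pi^2 / 2 * exp (- (3/2 * \<mu> * m0)) * exp (- (\<mu> * w^2 / (2 * m0)))"
proof -
  have "saddle_term \<mu> P m = 4 * pi^2 / m^3 * exp (- (3/2 * \<mu> * m0))
      * exp (- (\<mu> * (m - m0)^2 * (m0 + 2 * m) / (2 * m^2)))"
    using saddle_term_split[OF _ h] m by simp
  also have "\<dots> \<le> pi^2 / 2 * exp (- (3/2 * \<mu> * m0)) * exp (- (\<mu> * w^2 / (2 * m0)))"
  proof (intro mult_mono)
    have "2^3 \<le> m^3" using m by (intro power_mono) auto
    then show "4 * pi^2 / m^3 \<le> pi^2 / 2" using m by (simp add: field_simps)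
    show "exp (- (\<mu> * (m - m0)^2 * (m0 + 2 * m) / (2 * m^2))) \<le> exp (- (\<mu> * w^2 / (2 * m0)))"
      using saddle_remainder_far[OF mu m0 _ w d] m by simp
  qed auto
  finally show ?thesis .
qed

text \<open>Near the saddle point \<open>m0\<close> the exponent of \<open>saddle_term\<close> is compared with a Gaussian of
  variance \<open>m0 / (3 \<mu>)\<close>, far from it the terms are uniformly small.\<close>

lemma sum_saddle_term_upper:
  fixes \<mu> m0 w P :: real and n :: nat
  assumes mu: "\<mu> > 0" and m0: "m0 > 0" and h: "\<mu> * m0^3 = 2 * P"
    and w: "1 \<le> w" "w \<le> m0 / 2"
  shows "(\<Sum>m\<in>{2..n+1}. saddle_term \<mu> P (real m)) \<le>
     4 * pi^2 / (m0 - w)^3 * exp (- (3/2 * \<mu> * m0)) * exp (11 * \<mu> * w^3 / m0^2)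
       * (sqrt (pi / (3 * \<mu> / (2 * m0))) + 2)
     + real n * (pi^2 / 2) * exp (- (3/2 * \<mu> * m0)) * exp (- (\<mu> * w^2 / (2 * m0)))"
proof -
  define a where "a = 3 * \<mu> / (2 * m0)"
  define W where "W = {m::nat. \<bar>real m - m0\<bar> \<le> w}"
  define C where "C = 4 * pi^2 / (m0 - w)^3 * exp (- (3/2 * \<mu> * m0)) * exp (11 * \<mu> * w^3 / m0^2)"
  define E where "E = pi^2 / 2 * exp (- (3/2 * \<mu> * m0)) * exp (- (\<mu> * w^2 / (2 * m0)))"
  have "a > 0" using mu m0 by (simp add: a_def)
  have m0w: "m0 \<ge> w + 1" "m0 - w > 0" using w by linarith+
  then have "C \<ge> 0" by (simp add: C_def)
  note window = gauss_window_sum_bounds[OF \<open>a > 0\<close> w(1) m0w(1), folded W_def]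
  have "(\<Sum>m\<in>{2..n+1} \<inter> W. saddle_term \<mu> P (real m)) \<le> (\<Sum>m\<in>W. saddle_term \<mu> P (real m))"
    using m0w by (intro sum_mono2 window(1) saddle_term_nonneg) (auto simp: W_def)
  also have "\<dots> \<le> (\<Sum>m\<in>W. C * exp (- a * (real m - m0)^2))"
    unfolding C_def a_def
    by (intro sum_mono saddle_term_near_upper[OF mu m0 h]) (use w in \<open>auto simp: W_def\<close>)
  also have "\<dots> \<le> C * (sqrt (pi / a) + 2)"
    using window(2) \<open>C \<ge> 0\<close> by (simp add: sum_distrib_left[symmetric] mult_left_mono)
  finally have near: "(\<Sum>m\<in>{2..n+1} \<inter> W. saddle_term \<mu> P (real m)) \<le> C * (sqrt (pi / a) + 2)" .
  have "(\<Sum>m\<in>{2..n+1} - W. saddle_term \<mu> P (real m)) \<le> (\<Sum>m\<in>{2..n+1} - W. E)"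
    unfolding E_def
    by (intro sum_mono saddle_term_far_upper[OF mu m0 h]) (use w in \<open>auto simp: W_def\<close>)
  also have "\<dots> = real (card ({2..n+1} - W)) * E" by simp
  also have "\<dots> \<le> real n * E"
    using card_mono[of "{2..n+1}" "{2..n+1} - W"] by (intro mult_right_mono) (auto simp: E_def)
  finally have far: "(\<Sum>m\<in>{2..n+1} - W. saddle_term \<mu> P (real m)) \<le> real n * E" .
  have "(\<Sum>m\<in>{2..n+1}. saddle_term \<mu> P (real m)) =
      (\<Sum>m\<in>{2..n+1} \<inter> W. saddle_term \<mu> P (real m)) + (\<Sum>m\<in>{2..n+1} - W. saddle_term \<mu> P (real m))"
    by (rule sum.Int_Diff) simp
  with near far show ?thesis by (simp add: C_def E_def a_def mult_ac)
qed

text \<open>The factor \<open>(1 - (\<pi>/m)^2/6)^2 exp (- n (\<pi>/m)^4)\<close> comes from the lower Taylor bounds for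
  \<open>sin\<close> and \<open>cos\<close> in the dominant term of \<open>strip_sum\<close>.\<close>

definition corrected_saddle_term :: "real \<Rightarrow> nat \<Rightarrow> real \<Rightarrow> real" where
  "corrected_saddle_term \<mu> n m =
     saddle_term \<mu> (pi^2 * real n) m * (1 - (pi / m)^2 / 6)^2 * exp (- real n * (pi / m)^4)"

lemma corrected_factors_lower:
  fixes m m0 :: real and n :: nat
  assumes m08: "m0 \<ge> 8" and mlo: "m \<ge> m0 / 2"
  shows "0 \<le> 1 - 2 * pi^2 / (3 * m0^2)"
    and "(1 - 2 * pi^2 / (3 * m0^2))^2 \<le> (1 - (pi / m)^2 / 6)^2"
    and "exp (- (16 * real n * pi^4 / m0^4)) \<le> exp (- real n * (pi / m)^4)"
proof -
  have m0: "m0 > 0" using m08 by simp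
  have x2: "(pi / m)^2 \<le> 4 * pi^2 / m0^2"
  proof -
    have "(pi / m)^2 \<le> (pi / (m0 / 2))^2"
      using mlo m0 by (intro power_mono divide_left_mono) auto
    then show ?thesis by (simp add: power_divide field_simps)
  qed
  show F: "0 \<le> 1 - 2 * pi^2 / (3 * m0^2)"
  proof -
    have "64 \<le> m0^2" using power_mono[OF m08, of 2] by simp
    then have "2 * pi^2 / (3 * m0^2) \<le> 2 * 16 / (3 * 64)"
      using pi_squared_less_16 m0 by (intro frac_le) auto
    then show ?thesis by simp
  qed
  show "(1 - 2 * pi^2 / (3 * m0^2))^2 \<le> (1 - (pi / m)^2 / 6)^2"
    using x2 F m0 by (intro power_mono) (auto simp: field_simps)
  show "exp (- (16 * real n * pi^4 / m0^4)) \<le> exp (- real n * (pi / m)^4)"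
  proof -
    have "((pi / m)^2)^2 \<le> (4 * pi^2 / m0^2)^2" using x2 by (intro power_mono) auto
    then have "real n * (pi / m)^4 \<le> real n * (16 * pi^4 / m0^4)"
      by (intro mult_left_mono) (auto simp: power_divide power_mult_distrib eval_nat_numeral)
    then show ?thesis by (simp add: mult_ac)
  qed
qed

lemma corrected_saddle_term_near_lower:
  assumes mu: "\<mu> > 0" and m0: "m0 > 0" and h: "\<mu> * m0^3 = 2 * (pi^2 * real n)"
    and w: "0 \<le> w" "w \<le> m0 / 2" and m08: "m0 \<ge> 8" and d: "\<bar>m - m0\<bar> \<le> w"
  shows "4 * pi^2 / (m0 + w)^3 * exp (- (3/2 * \<mu> * m0)) * exp (- (11 * \<mu> * w^3 / m0^2))
      * (1 - 2 * pi^2 / (3 * m0^2))^2 * exp (- (16 * real n * pi^4 / m0^4))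
      * exp (- (3 * \<mu> / (2 * m0)) * (m - m0)^2)
    \<le> corrected_saddle_term \<mu> n m"
proof -
  have mlo: "m \<ge> m0 / 2" and mpos: "m > 0" using d w m0 by auto
  have "4 * pi^2 / (m0 + w)^3 * exp (- (3/2 * \<mu> * m0))
      * (exp (- (3 * \<mu> / (2 * m0)) * (m - m0)^2) * exp (- (11 * \<mu> * w^3 / m0^2)))
      \<le> 4 * pi^2 / m^3 * exp (- (3/2 * \<mu> * m0)) * exp (- (\<mu> * (m - m0)^2 * (m0 + 2 * m) / (2 * m^2)))"
  proof (intro mult_mono)
    show "4 * pi^2 / (m0 + w)^3 \<le> 4 * pi^2 / m^3"
      using d mpos by (intro divide_left_mono power_mono) auto
    have "- (3 * \<mu> / (2 * m0)) * (m - m0)^2 + - (11 * \<mu> * w^3 / m0^2)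
        \<le> - (\<mu> * (m - m0)^2 * (m0 + 2 * m) / (2 * m^2))"
      using saddle_remainder_near[OF mu m0 w d] by linarith
    then show "exp (- (3 * \<mu> / (2 * m0)) * (m - m0)^2) * exp (- (11 * \<mu> * w^3 / m0^2))
        \<le> exp (- (\<mu> * (m - m0)^2 * (m0 + 2 * m) / (2 * m^2)))"
      by (simp add: exp_add[symmetric])
  qed (use mpos m0 w in auto)
  also have "\<dots> = saddle_term \<mu> (pi^2 * real n) m" using saddle_term_split[OF mpos h] by simp
  finally have near: "4 * pi^2 / (m0 + w)^3 * exp (- (3/2 * \<mu> * m0))
      * (exp (- (3 * \<mu> / (2 * m0)) * (m - m0)^2) * exp (- (11 * \<mu> * w^3 / m0^2)))
      \<le> saddle_term \<mu> (pi^2 * real n) m" .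
  note corr = corrected_factors_lower[OF m08 mlo]
  have "4 * pi^2 / (m0 + w)^3 * exp (- (3/2 * \<mu> * m0)) * exp (- (11 * \<mu> * w^3 / m0^2))
      * (1 - 2 * pi^2 / (3 * m0^2))^2 * exp (- (16 * real n * pi^4 / m0^4))
      * exp (- (3 * \<mu> / (2 * m0)) * (m - m0)^2)
    = 4 * pi^2 / (m0 + w)^3 * exp (- (3/2 * \<mu> * m0))
      * (exp (- (3 * \<mu> / (2 * m0)) * (m - m0)^2) * exp (- (11 * \<mu> * w^3 / m0^2)))
      * (1 - 2 * pi^2 / (3 * m0^2))^2 * exp (- (16 * real n * pi^4 / m0^4))"
    by (simp add: mult_ac)
  also have "\<dots> \<le> saddle_term \<mu> (pi^2 * real n) m * (1 - (pi / m)^2 / 6)^2 * exp (- real n * (pi / m)^4)"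
    using near corr saddle_term_nonneg[OF mpos, of \<mu> "pi^2 * real n"] m0 w
    by (intro mult_mono) auto
  finally show ?thesis unfolding corrected_saddle_term_def .
qed

lemma sum_corrected_saddle_term_lower:
  fixes \<mu> m0 w :: real and n :: nat
  assumes mu: "\<mu> > 0" and m0: "m0 > 0" and h: "\<mu> * m0^3 = 2 * (pi^2 * real n)"
    and w: "1 \<le> w" "w \<le> m0 / 2" and m08: "m0 \<ge> 8"
  shows "4 * pi^2 / (m0 + w)^3 * exp (- (3/2 * \<mu> * m0)) * exp (- (11 * \<mu> * w^3 / m0^2))
      * (1 - 2 * pi^2 / (3 * m0^2))^2 * exp (- (16 * real n * pi^4 / m0^4))
      * (sqrt (pi / (3 * \<mu> / (2 * m0))) - exp (- (3 * \<mu> / (2 * m0)) * w^2) / ((3 * \<mu> / (2 * m0)) * w) - 2)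
    \<le> (\<Sum>m\<in>{m::nat. \<bar>real m - m0\<bar> \<le> w}. corrected_saddle_term \<mu> n (real m))"
proof -
  define a where "a = 3 * \<mu> / (2 * m0)"
  define W where "W = {m::nat. \<bar>real m - m0\<bar> \<le> w}"
  define D where "D = 4 * pi^2 / (m0 + w)^3 * exp (- (3/2 * \<mu> * m0)) * exp (- (11 * \<mu> * w^3 / m0^2))
      * (1 - 2 * pi^2 / (3 * m0^2))^2 * exp (- (16 * real n * pi^4 / m0^4))"
  have "a > 0" using mu m0 by (simp add: a_def)
  have "m0 \<ge> w + 1" using w m08 by linarith
  note window = gauss_window_sum_bounds[OF \<open>a > 0\<close> w(1) this, folded W_def]
  have "D \<ge> 0" using m0 w by (simp add: D_def)
  then have "D * (sqrt (pi / a) - exp (- a * w^2) / (a * w) - 2) \<le> D * (\<Sum>m\<in>W. exp (- a * (real m - m0)^2))"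
    using window(3) by (intro mult_left_mono) auto
  also have "\<dots> = (\<Sum>m\<in>W. D * exp (- a * (real m - m0)^2))" by (simp add: sum_distrib_left)
  also have "\<dots> \<le> (\<Sum>m\<in>W. corrected_saddle_term \<mu> n (real m))"
    unfolding D_def a_def
    by (intro sum_mono corrected_saddle_term_near_lower[OF mu m0 h _ w(2) m08])
      (use w in \<open>auto simp: W_def\<close>)
  finally show ?thesis by (simp add: D_def a_def W_def mult_ac)
qed

section \<open>Bounds for \<open>Z\<close> and their asymptotics\<close>

lemma strip_sum_term_upper:
  assumes mu: "\<mu> > 0" and m: "m \<ge> 2" and h1: "\<mu> * m1^3 = 2 * (4 * pi^2 * real n)"
  shows "exp (- \<mu> * real m) * strip_sum n m
      \<le> saddle_term \<mu> (pi^2 * real n) (real m) + 2 * exp (- (3/2 * \<mu> * m1))"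
proof -
  have mpos: "real m > 0" using m by simp
  have "exp (- \<mu> * real m) * strip_sum n m \<le> exp (- \<mu> * real m) *
     (4 * pi^2 / real m^3 * exp (- real n * (pi / real m)^2) + 2 * exp (- real n * (2 * pi / real m)^2))"
    using strip_sum_upper[OF m, of n] by (intro mult_left_mono) auto
  also have "\<dots> = saddle_term \<mu> (pi^2 * real n) (real m)
      + 2 * exp (- (4 * pi^2 * real n / real m^2 + \<mu> * real m))"
    by (simp add: saddle_term_def algebra_simps exp_add[symmetric] power_divide power_mult_distrib)
  also have "exp (- (4 * pi^2 * real n / real m^2 + \<mu> * real m)) \<le> exp (- (3/2 * \<mu> * m1))"
  proof -
    have "0 \<le> \<mu> * m1^3" using h1 by simp
    then have "m1 \<ge> 0" using mu by (simp add: zero_le_mult_iff zero_le_power_eq)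
    then have "0 \<le> \<mu> * (real m - m1)^2 * (m1 + 2 * real m) / (2 * real m^2)"
      using mu mpos by simp
    then show ?thesis unfolding saddle_identity[OF mpos h1] by simp
  qed
  finally show ?thesis by simp
qed

lemma strip_sum_term_lower:
  assumes m: "m \<ge> 4"
  shows "corrected_saddle_term \<mu> n (real m) \<le> exp (- \<mu> * real m) * strip_sum n m"
proof -
  have "corrected_saddle_term \<mu> n (real m) = exp (- \<mu> * real m) * (4 / real m * ((pi / real m)^2
      * (1 - (pi / real m)^2 / 6)^2 * exp (- real n * (pi / real m)^2 - real n * (pi / real m)^4)))"
    by (simp add: corrected_saddle_term_def saddle_term_def power_divide power3_eq_cube
        power2_eq_square exp_diff exp_add[symmetric] field_simps exp_minus)
  also have "\<dots> \<le> exp (- \<mu> * real m) * strip_sum n m"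
    using strip_sum_lower[OF m, of n] by (intro mult_left_mono) auto
  finally show ?thesis .
qed

text \<open>The auxiliary point \<open>m1 = 4^(1/3) m0\<close> is the saddle point for the subdominant terms
  \<open>j \<ge> 2\<close> of \<open>strip_sum\<close>.\<close>

lemma Z_Suc_le_saddle_sum:
  assumes mu: "\<mu> > 0" and h1: "\<mu> * m1^3 = 2 * (4 * pi^2 * real n)"
  shows "Z \<mu> (Suc n) \<le> (exp \<mu> - 1) * 4^n * ((\<Sum>m\<in>{2..n+1}. saddle_term \<mu> (pi^2 * real n) (real m))
      + real n * (2 * exp (- (3/2 * \<mu> * m1)))) + exp (- \<mu> * real (n + 1)) * 4^n * 2"
proof -
  have "(\<Sum>m\<in>{2..n+1}. exp (- \<mu> * real m) * strip_sum n m)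
      \<le> (\<Sum>m\<in>{2..n+1}. saddle_term \<mu> (pi^2 * real n) (real m) + 2 * exp (- (3/2 * \<mu> * m1)))"
    by (intro sum_mono strip_sum_term_upper[OF mu _ h1]) auto
  also have "\<dots> = (\<Sum>m\<in>{2..n+1}. saddle_term \<mu> (pi^2 * real n) (real m))
      + real n * (2 * exp (- (3/2 * \<mu> * m1)))"
    by (simp add: sum.distrib)
  finally have "(exp \<mu> - 1) * 4^n * (\<Sum>m\<in>{2..n+1}. exp (- \<mu> * real m) * strip_sum n m)
      \<le> (exp \<mu> - 1) * 4^n * ((\<Sum>m\<in>{2..n+1}. saddle_term \<mu> (pi^2 * real n) (real m))
        + real n * (2 * exp (- (3/2 * \<mu> * m1))))"
    using mu by (intro mult_left_mono) auto
  moreover have "exp (- \<mu> * real (n + 1)) * 4^n * strip_sum n (n + 2) \<le> exp (- \<mu> * real (n + 1)) * 4^n * 2"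
    using strip_sum_le_2[of n "n + 2"] by (intro mult_left_mono) auto
  ultimately show ?thesis unfolding Z_Suc_strip_sums by linarith
qed

lemma Z_Suc_ge_corrected_sum:
  assumes mu: "\<mu> > 0" and W: "W \<subseteq> {4..n+1}"
  shows "(exp \<mu> - 1) * 4^n * (\<Sum>m\<in>W. corrected_saddle_term \<mu> n (real m)) \<le> Z \<mu> (Suc n)"
proof -
  have "(\<Sum>m\<in>W. corrected_saddle_term \<mu> n (real m)) \<le> (\<Sum>m\<in>W. exp (- \<mu> * real m) * strip_sum n m)"
    using W by (intro sum_mono strip_sum_term_lower) auto
  also have "\<dots> \<le> (\<Sum>m\<in>{2..n+1}. exp (- \<mu> * real m) * strip_sum n m)"
    using W by (intro sum_mono2) (auto intro: mult_nonneg_nonneg strip_sum_nonneg)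
  finally have "(exp \<mu> - 1) * 4^n * (\<Sum>m\<in>W. corrected_saddle_term \<mu> n (real m))
      \<le> (exp \<mu> - 1) * 4^n * (\<Sum>m\<in>{2..n+1}. exp (- \<mu> * real m) * strip_sum n m)"
    using mu by (intro mult_left_mono) auto
  moreover have "0 \<le> exp (- \<mu> * real (n + 1)) * 4^n * strip_sum n (n + 2)"
    using strip_sum_nonneg by simp
  ultimately show ?thesis unfolding Z_Suc_strip_sums by linarith
qed

lemma real_cube_inj: "(x::real) \<ge> 0 \<Longrightarrow> y \<ge> 0 \<Longrightarrow> x^3 = y^3 \<Longrightarrow> x = y"
  by (metis power_eq_imp_eq_base zero_less_numeral)

lemma powr_one_third_cube: "(x::real) \<ge> 0 \<Longrightarrow> (x powr (1/3))^3 = x"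
  by (cases "x = 0") (simp_all add: powr_power)

lemma powr_two_thirds_cube: "(x::real) \<ge> 0 \<Longrightarrow> (x powr (2/3))^3 = x^2"
  by (cases "x = 0") (simp_all add: powr_power)

lemma exponent_constant_eq:
  fixes \<mu> :: real assumes mu: "\<mu> > 0"
  shows "3 * (pi * \<mu> / 2) powr (2/3) = 3/2 * \<mu> * (2 * pi^2 / \<mu>) powr (1/3)"
proof (rule real_cube_inj)
  show "0 \<le> 3 * (pi * \<mu> / 2) powr (2/3)" by simp
  show "0 \<le> 3/2 * \<mu> * (2 * pi^2 / \<mu>) powr (1/3)" using mu by simp
  have k3: "((2 * pi^2 / \<mu>) powr (1/3))^3 = 2 * pi^2 / \<mu>" using mu by (intro powr_one_third_cube) simp
  have "(3 * (pi * \<mu> / 2) powr (2/3))^3 = 27 * (pi * \<mu> / 2)^2"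
    using mu by (simp add: power_mult_distrib powr_two_thirds_cube)
  also have "\<dots> = (3/2 * \<mu>)^3 * (2 * pi^2 / \<mu>)" using mu by (simp add: field_simps power2_eq_square power3_eq_cube)
  also have "\<dots> = (3/2 * \<mu>)^3 * ((2 * pi^2 / \<mu>) powr (1/3))^3" by (simp only: k3)
  also have "\<dots> = (3/2 * \<mu> * (2 * pi^2 / \<mu>) powr (1/3))^3" by (simp only: power_mult_distrib)
  finally show "(3 * (pi * \<mu> / 2) powr (2/3))^3 = (3/2 * \<mu> * (2 * pi^2 / \<mu>) powr (1/3))^3" .
qed

lemma gaussian_width_eq:
  fixes \<mu> :: real assumes mu: "\<mu> > 0"
  shows "pi / (3 * (\<mu>^2 / (4 * pi)) powr (2/3)) = 2 * pi * (2 * pi^2 / \<mu>) powr (1/3) / (3 * \<mu>)"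
proof (rule real_cube_inj)
  show "0 \<le> pi / (3 * (\<mu>^2 / (4 * pi)) powr (2/3))" by simp
  show "0 \<le> 2 * pi * (2 * pi^2 / \<mu>) powr (1/3) / (3 * \<mu>)" using mu by simp
  have k3: "((2 * pi^2 / \<mu>) powr (1/3))^3 = 2 * pi^2 / \<mu>" using mu by (intro powr_one_third_cube) simp
  have "(pi / (3 * (\<mu>^2 / (4 * pi)) powr (2/3)))^3 = pi^3 / (27 * (\<mu>^2 / (4 * pi))^2)"
    using mu by (simp add: power_divide power_mult_distrib powr_two_thirds_cube)
  also have "\<dots> = (2 * pi / (3 * \<mu>))^3 * (2 * pi^2 / \<mu>)"
    using mu by (simp add: field_simps power2_eq_square power3_eq_cube)
  also have "\<dots> = (2 * pi / (3 * \<mu>))^3 * ((2 * pi^2 / \<mu>) powr (1/3))^3" by (simp only: k3)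
  also have "\<dots> = (2 * pi * (2 * pi^2 / \<mu>) powr (1/3) / (3 * \<mu>))^3"
    by (simp add: power_divide power_mult_distrib)
  finally show "(pi / (3 * (\<mu>^2 / (4 * pi)) powr (2/3)))^3 = (2 * pi * (2 * pi^2 / \<mu>) powr (1/3) / (3 * \<mu>))^3" .
qed

lemma cube_root_4_ge: "3/2 \<le> (4::real) powr (1/3)"
proof (rule ccontr)
  assume "\<not> 3/2 \<le> (4::real) powr (1/3)"
  then have "(4::real) powr (1/3) < 3/2" by simp
  then have "((4::real) powr (1/3))^3 < (3/2)^3" by (intro power_strict_mono) auto
  then show False using powr_one_third_cube[of 4] by (simp add: eval_nat_numeral)
qed

text \<open>With \<open>y = n = N - 1\<close>, saddle point \<open>m0 = \<kappa> y^(1/3)\<close> and window half-width \<open>w\<close>, these are the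
  explicit bounds for \<open>Z \<mu> N / ((e^\<mu> - 1) 4^N)\<close> obtained below.\<close>

definition Z_upper_envelope :: "real \<Rightarrow> real \<Rightarrow> real \<Rightarrow> real \<Rightarrow> real \<Rightarrow> real \<Rightarrow> real" where
  "Z_upper_envelope \<mu> \<kappa> A S y w =
     \<mu> / (2 * y) * (\<kappa> * y powr (1/3) / (\<kappa> * y powr (1/3) - w))^3
      * exp (- A * y powr (1/3)) * exp (11 * \<mu> * w^3 / (\<kappa> * y powr (1/3))^2)
      * (S * y powr (1/6) + 2)
     + y * (pi^2/8) * exp (- A * y powr (1/3)) * exp (- (\<mu> * w^2 / (2 * (\<kappa> * y powr (1/3)))))
     + y / 2 * exp (- (3/2 * A) * y powr (1/3)) + 1 / (2 * (exp \<mu> - 1)) * exp (- \<mu> * (y + 1))"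

definition Z_lower_envelope :: "real \<Rightarrow> real \<Rightarrow> real \<Rightarrow> real \<Rightarrow> real \<Rightarrow> real \<Rightarrow> real" where
  "Z_lower_envelope \<mu> \<kappa> A S y w =
     \<mu> / (2 * y) * (\<kappa> * y powr (1/3) / (\<kappa> * y powr (1/3) + w))^3
      * exp (- A * y powr (1/3)) * exp (- (11 * \<mu> * w^3 / (\<kappa> * y powr (1/3))^2))
      * (1 - 2 * pi^2 / (3 * (\<kappa> * y powr (1/3))^2))^2 * exp (- (16 * y * pi^4 / (\<kappa> * y powr (1/3))^4))
      * (S * y powr (1/6) - exp (- (3 * \<mu> / (2 * (\<kappa> * y powr (1/3)))) * w^2)
            / ((3 * \<mu> / (2 * (\<kappa> * y powr (1/3)))) * w) - 2)"

locale saddle_constants =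
  fixes \<mu> \<kappa> A S :: real
  assumes mu: "\<mu> > 0" and kap: "\<kappa> > 0" and hk: "\<kappa>^3 = 2 * pi^2 / \<mu>"
    and hA: "A = 3/2 * \<mu> * \<kappa>" and hS: "S = sqrt (2 * pi * \<kappa> / (3 * \<mu>))"
begin

lemma saddle_point_cube: "y \<ge> 0 \<Longrightarrow> \<mu> * (\<kappa> * y powr (1/3))^3 = 2 * (pi^2 * y)"
  using mu by (simp add: power_mult_distrib hk powr_one_third_cube field_simps)

lemma pi_squared_div_cube:
  assumes y: "y > 0" and d: "d \<noteq> 0"
  shows "pi^2 / d^3 = \<mu> / (2 * y) * (\<kappa> * y powr (1/3) / d)^3"
proof -
  have "pi^2 = \<mu> * (\<kappa> * y powr (1/3))^3 / (2 * y)"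
    using saddle_point_cube[of y] y by (simp add: field_simps)
  then show ?thesis using d y by (simp add: power_divide)
qed

lemma sqrt_gaussian_width:
  assumes y: "y > 0"
  shows "sqrt (pi / (3 * \<mu> / (2 * (\<kappa> * y powr (1/3))))) = S * y powr (1/6)"
proof -
  have "pi / (3 * \<mu> / (2 * (\<kappa> * y powr (1/3)))) = 2 * pi * \<kappa> / (3 * \<mu>) * y powr (1/3)"
    using mu by (simp add: field_simps)
  moreover have "sqrt (y powr (1/3)) = y powr (1/6)"
    using powr_half_sqrt_powr[of y "1/3"] y by simp
  ultimately show ?thesis by (simp only: hS real_sqrt_mult)
qed

lemma exp_saddle_value: "exp (- (3/2 * \<mu> * (\<kappa> * y powr (1/3)))) = exp (- A * y powr (1/3))"
  by (simp add: hA mult_ac)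

lemma Z_le_upper_envelope:
  fixes n :: nat and w :: real
  assumes n: "n \<ge> 1" and w: "1 \<le> w" "w \<le> \<kappa> * real n powr (1/3) / 2"
  shows "Z \<mu> (Suc n) \<le> (exp \<mu> - 1) * 4^(Suc n) * Z_upper_envelope \<mu> \<kappa> A S (real n) w"
proof -
  define y where "y = real n"
  define m0 where "m0 = \<kappa> * y powr (1/3)"
  define a where "a = 3 * \<mu> / (2 * m0)"
  define E0 where "E0 = exp (- (3/2 * \<mu> * m0))"
  define E1 where "E1 = exp (- (3/2 * \<mu> * (4 powr (1/3) * m0)))"
  define U1 where "U1 = 4 * pi^2 / (m0 - w)^3 * E0 * exp (11 * \<mu> * w^3 / m0^2) * (sqrt (pi / a) + 2)"
  define U2 where "U2 = real n * (pi^2 / 2) * E0 * exp (- (\<mu> * w^2 / (2 * m0)))"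
  have y: "y > 0" and m0: "m0 > 0" using n kap by (simp_all add: y_def m0_def)
  have h: "\<mu> * m0^3 = 2 * (pi^2 * real n)" using saddle_point_cube[of y] y by (simp add: m0_def y_def)
  then have h1: "\<mu> * (4 powr (1/3) * m0)^3 = 2 * (4 * pi^2 * real n)"
    by (simp add: power_mult_distrib powr_one_third_cube)
  have wm: "w \<le> m0 / 2" "m0 - w \<noteq> 0" using w by (simp_all add: m0_def y_def)
  have em: "exp \<mu> - 1 > 0" using mu by simp
  have "(\<Sum>m\<in>{2..n+1}. saddle_term \<mu> (pi^2 * real n) (real m)) \<le> U1 + U2"
    using sum_saddle_term_upper[OF mu m0 h w(1) wm(1)] by (simp add: U1_def U2_def E0_def a_def mult_ac)
  note saddle_sum = this
  have "Z \<mu> (Suc n) \<le> (exp \<mu> - 1) * 4^n * ((\<Sum>m\<in>{2..n+1}. saddle_term \<mu> (pi^2 * real n) (real m))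
      + real n * (2 * E1)) + exp (- \<mu> * real (n + 1)) * 4^n * 2"
    by (rule Z_Suc_le_saddle_sum[OF mu h1, folded E1_def])
  also have "\<dots> \<le> (exp \<mu> - 1) * 4^n * (U1 + U2 + real n * (2 * E1)) + exp (- \<mu> * real (n + 1)) * 4^n * 2"
    using saddle_sum em by (intro add_right_mono mult_left_mono) auto
  also have "\<dots> = (exp \<mu> - 1) * 4^(Suc n)
      * (U1 / 4 + U2 / 4 + real n / 2 * E1 + 1 / (2 * (exp \<mu> - 1)) * exp (- \<mu> * (y + 1)))"
    using em by (simp add: field_simps y_def)
  also have "\<dots> \<le> (exp \<mu> - 1) * 4^(Suc n) * Z_upper_envelope \<mu> \<kappa> A S (real n) w"
  proof (intro mult_left_mono)
    have "U1 / 4 = pi^2 / (m0 - w)^3 * E0 * exp (11 * \<mu> * w^3 / m0^2) * (sqrt (pi / a) + 2)"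
      by (simp add: U1_def)
    also have "pi^2 / (m0 - w)^3 = \<mu> / (2 * y) * (m0 / (m0 - w))^3"
      using pi_squared_div_cube[OF y wm(2)] by (simp add: m0_def)
    also have "sqrt (pi / a) = S * y powr (1/6)"
      using sqrt_gaussian_width[OF y] by (simp add: a_def m0_def)
    also have "E0 = exp (- A * y powr (1/3))"
      using exp_saddle_value by (simp add: E0_def m0_def)
    finally have "U1 / 4 = \<mu> / (2 * y) * (m0 / (m0 - w))^3 * exp (- A * y powr (1/3))
        * exp (11 * \<mu> * w^3 / m0^2) * (S * y powr (1/6) + 2)" .
    moreover have "U2 / 4 = y * (pi^2/8) * exp (- A * y powr (1/3)) * exp (- (\<mu> * w^2 / (2 * m0)))"
      using exp_saddle_value hA by (simp add: U2_def E0_def m0_def y_def)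
    moreover have "real n / 2 * E1 \<le> y / 2 * exp (- (3/2 * A) * y powr (1/3))"
    proof -
      have "0 \<le> A * y powr (1/3)" using mu kap by (simp add: hA)
      then have "3/2 * (A * y powr (1/3)) \<le> 4 powr (1/3) * (A * y powr (1/3))"
        using cube_root_4_ge by (intro mult_right_mono) auto
      then have "E1 \<le> exp (- (3/2 * A) * y powr (1/3))"
        by (simp add: E1_def m0_def hA mult_ac)
      then show ?thesis unfolding y_def by (intro mult_left_mono) auto
    qed
    ultimately show "U1 / 4 + U2 / 4 + real n / 2 * E1 + 1 / (2 * (exp \<mu> - 1)) * exp (- \<mu> * (y + 1))
        \<le> Z_upper_envelope \<mu> \<kappa> A S (real n) w"
      unfolding Z_upper_envelope_def m0_def[symmetric] y_def[symmetric] by linarith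
  qed (use em in simp)
  finally show ?thesis .
qed

lemma Z_ge_lower_envelope:
  fixes n :: nat and w :: real
  assumes n: "n \<ge> 1" and w: "1 \<le> w" "w \<le> \<kappa> * real n powr (1/3) / 2"
    and m08: "\<kappa> * real n powr (1/3) \<ge> 8" and top: "3 * (\<kappa> * real n powr (1/3)) / 2 \<le> real n + 1"
  shows "(exp \<mu> - 1) * 4^(Suc n) * Z_lower_envelope \<mu> \<kappa> A S (real n) w \<le> Z \<mu> (Suc n)"
proof -
  define y where "y = real n"
  define m0 where "m0 = \<kappa> * y powr (1/3)"
  define a where "a = 3 * \<mu> / (2 * m0)"
  define W where "W = {m::nat. \<bar>real m - m0\<bar> \<le> w}"
  define L where "L = 4 * pi^2 / (m0 + w)^3 * exp (- (3/2 * \<mu> * m0)) * exp (- (11 * \<mu> * w^3 / m0^2))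
      * (1 - 2 * pi^2 / (3 * m0^2))^2 * exp (- (16 * real n * pi^4 / m0^4))
      * (sqrt (pi / a) - exp (- a * w^2) / (a * w) - 2)"
  have y: "y > 0" and m0: "m0 > 0" using n kap by (simp_all add: y_def m0_def)
  have h: "\<mu> * m0^3 = 2 * (pi^2 * real n)" using saddle_point_cube[of y] y by (simp add: m0_def y_def)
  have wm: "w \<le> m0 / 2" "m0 \<ge> 8" "m0 + w \<noteq> 0" using w m08 by (simp_all add: m0_def y_def)
  have "W \<subseteq> {4..n+1}"
  proof
    fix m assume "m \<in> W"
    then have "4 \<le> real m" "real m \<le> real n + 1"
      using wm top by (auto simp: W_def m0_def y_def)
    then show "m \<in> {4..n+1}" by simp
  qed
  note Wsub = this
  have "L \<le> (\<Sum>m\<in>W. corrected_saddle_term \<mu> n (real m))"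
    using sum_corrected_saddle_term_lower[OF mu m0 h w(1) wm(1,2)] by (simp add: L_def a_def W_def)
  then have "(exp \<mu> - 1) * 4^n * L \<le> (exp \<mu> - 1) * 4^n * (\<Sum>m\<in>W. corrected_saddle_term \<mu> n (real m))"
    using mu by (intro mult_left_mono) auto
  also have "\<dots> \<le> Z \<mu> (Suc n)" by (rule Z_Suc_ge_corrected_sum[OF mu Wsub])
  finally have "(exp \<mu> - 1) * 4^n * L \<le> Z \<mu> (Suc n)" .
  moreover have "L = 4 * Z_lower_envelope \<mu> \<kappa> A S (real n) w"
  proof -
    have "4 * pi^2 / (m0 + w)^3 = 4 * (\<mu> / (2 * y) * (m0 / (m0 + w))^3)"
      using pi_squared_div_cube[OF y wm(3)] by (simp add: m0_def)
    moreover have "sqrt (pi / a) = S * y powr (1/6)"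
      using sqrt_gaussian_width[OF y] by (simp add: a_def m0_def)
    moreover have "exp (- (3/2 * \<mu> * m0)) = exp (- A * y powr (1/3))"
      using exp_saddle_value by (simp add: m0_def)
    moreover have "Z_lower_envelope \<mu> \<kappa> A S (real n) w = \<mu> / (2 * y) * (m0 / (m0 + w))^3
        * exp (- A * y powr (1/3)) * exp (- (11 * \<mu> * w^3 / m0^2))
        * (1 - 2 * pi^2 / (3 * m0^2))^2 * exp (- (16 * y * pi^4 / m0^4))
        * (S * y powr (1/6) - exp (- a * w^2) / (a * w) - 2)"
      unfolding Z_lower_envelope_def m0_def y_def a_def by (rule refl)
    ultimately show ?thesis unfolding L_def by (simp add: y_def mult_ac)
  qed
  ultimately show ?thesis by (simp add: mult_ac)
qed

lemma eventually_Z_between_envelopes: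
  fixes \<beta> :: real
  assumes \<beta>: "0 < \<beta>" "\<beta> < 1/3"
  shows "\<forall>\<^sub>F N in sequentially.
      (exp \<mu> - 1) * 4^N * Z_lower_envelope \<mu> \<kappa> A S (real N - 1) ((real N - 1) powr \<beta>) \<le> Z \<mu> N \<and>
      Z \<mu> N \<le> (exp \<mu> - 1) * 4^N * Z_upper_envelope \<mu> \<kappa> A S (real N - 1) ((real N - 1) powr \<beta>)"
proof -
  have "\<forall>\<^sub>F x in at_top. 1 \<le> (x - 1) powr \<beta> \<and> (x - 1) powr \<beta> \<le> \<kappa> * (x - 1) powr (1/3) / 2
      \<and> 8 \<le> \<kappa> * (x - 1) powr (1/3) \<and> 3 * (\<kappa> * (x - 1) powr (1/3)) / 2 \<le> (x - 1) + 1 \<and> 2 \<le> x"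
    using kap \<beta> by (intro eventually_conj; real_asymp)
  from eventually_compose_filterlim[OF this filterlim_real_sequentially]
  show ?thesis
  proof eventually_elim
    case (elim N)
    define n where "n = N - 1"
    have N: "N = Suc n" "n \<ge> 1" and n: "real n = real N - 1"
      using elim by (auto simp: n_def)
    show ?case
      using Z_le_upper_envelope[of n] Z_ge_lower_envelope[of n] elim unfolding N(1) n[symmetric]
      by (simp add: N(2))
  qed
qed

end

lemma Z_upper_envelope_asymp:
  fixes S A \<kappa> \<mu> \<delta> :: real
  assumes "S > 0" "A > 0" "\<kappa> > 0" "\<mu> > 0" "\<delta> > 0" "\<delta> < 1/6"
  shows "(\<lambda>N. Z_upper_envelope \<mu> \<kappa> A S (real N - 1) ((real N - 1) powr (2/9 - \<delta>/3))
              - \<mu> / 2 * S * exp (- A * real N powr (1/3)) * real N powr (-5/6))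
    \<in> O(\<lambda>N. \<mu> / 2 * S * exp (- A * real N powr (1/3)) * real N powr (-5/6) * real N powr (-\<delta>))"
proof -
  define c where "c = 1 / (2 * (exp \<mu> - 1))"
  have "c > 0" using assms by (simp add: c_def)
  then have "(\<lambda>x. Z_upper_envelope \<mu> \<kappa> A S (x - 1) ((x - 1) powr (2/9 - \<delta>/3))
              - \<mu> / 2 * S * exp (- A * x powr (1/3)) * x powr (-5/6))
    \<in> O(\<lambda>x. \<mu> / 2 * S * exp (- A * x powr (1/3)) * x powr (-5/6) * x powr (-\<delta>))"
    unfolding Z_upper_envelope_def c_def[symmetric] using assms by real_asymp
  from landau_o.big.compose[OF this filterlim_real_sequentially] show ?thesis .
qed

lemma Z_lower_envelope_asymp:
  fixes S A \<kappa> \<mu> \<delta> :: real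
  assumes "S > 0" "A > 0" "\<kappa> > 0" "\<mu> > 0" "\<delta> > 0" "\<delta> < 1/6"
  shows "(\<lambda>N. \<mu> / 2 * S * exp (- A * real N powr (1/3)) * real N powr (-5/6)
              - Z_lower_envelope \<mu> \<kappa> A S (real N - 1) ((real N - 1) powr (2/9 - \<delta>/3)))
    \<in> O(\<lambda>N. \<mu> / 2 * S * exp (- A * real N powr (1/3)) * real N powr (-5/6) * real N powr (-\<delta>))"
proof -
  have "(\<lambda>x. \<mu> / 2 * S * exp (- A * x powr (1/3)) * x powr (-5/6)
              - Z_lower_envelope \<mu> \<kappa> A S (x - 1) ((x - 1) powr (2/9 - \<delta>/3)))
    \<in> O(\<lambda>x. \<mu> / 2 * S * exp (- A * x powr (1/3)) * x powr (-5/6) * x powr (-\<delta>))"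
    unfolding Z_lower_envelope_def using assms by real_asymp
  from landau_o.big.compose[OF this filterlim_real_sequentially] show ?thesis .
qed

lemma bigo_sandwich:
  fixes f l u t g c :: "'a \<Rightarrow> real"
  assumes between: "eventually (\<lambda>x. c x * l x \<le> f x \<and> f x \<le> c x * u x) F"
    and c: "eventually (\<lambda>x. 0 \<le> c x) F"
    and u: "(\<lambda>x. u x - t x) \<in> O[F](g)" and l: "(\<lambda>x. t x - l x) \<in> O[F](g)"
  shows "(\<lambda>x. f x - c x * t x) \<in> O[F](\<lambda>x. c x * g x)"
proof -
  have "(\<lambda>x. \<bar>u x - t x\<bar> + \<bar>t x - l x\<bar>) \<in> O[F](g)"
    using u l by (intro sum_in_bigo) simp_all
  then have bound: "(\<lambda>x. c x * (\<bar>u x - t x\<bar> + \<bar>t x - l x\<bar>)) \<in> O[F](\<lambda>x. c x * g x)"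
    by (intro landau_o.big.mult landau_o.big_refl)
  have "eventually (\<lambda>x. norm (f x - c x * t x)
      \<le> norm (c x * (\<bar>u x - t x\<bar> + \<bar>t x - l x\<bar>))) F"
    using between c
  proof eventually_elim
    case (elim x)
    have "f x - c x * t x \<le> c x * (u x - t x)" "c x * t x - f x \<le> c x * (t x - l x)"
      using elim by (simp_all add: algebra_simps)
    moreover have "c x * (u x - t x) \<le> c x * (\<bar>u x - t x\<bar> + \<bar>t x - l x\<bar>)"
      and "c x * (t x - l x) \<le> c x * (\<bar>u x - t x\<bar> + \<bar>t x - l x\<bar>)"
      using elim by (intro mult_left_mono; simp)+
    ultimately show ?case using elim by (simp add: abs_mult)
  qed
  from landau_o.big_mono[OF this] bound show ?thesis by (rule landau_o.big_trans)
qed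

theorem mainTheorem11:
  fixes \<mu> \<delta> A B :: real
  assumes "\<mu> > 0"
    and "A = 3 * (pi * \<mu> / 2) powr (2/3)"
    and "B = 3 * (\<mu>^2 / (4 * pi)) powr (2/3)"
    and "0 < \<delta>" and "\<delta> < 1/6"
  shows "(\<lambda>N. Z \<mu> N - (exp \<mu> - 1) * sqrt (pi / B) * (\<mu> / 2) * exp (- A * real N powr (1/3))
               * real N powr (-5/6) * 4 ^ N)
         \<in> O(\<lambda>N. (exp \<mu> - 1) * sqrt (pi / B) * (\<mu> / 2) * exp (- A * real N powr (1/3))
               * real N powr (-5/6) * 4 ^ N * real N powr (- \<delta>))"
proof -
  note \<mu> = assms(1) and \<delta> = assms(4,5)
  define \<kappa> where "\<kappa> = (2 * pi^2 / \<mu>) powr (1/3)"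
  define S where "S = sqrt (2 * pi * \<kappa> / (3 * \<mu>))"
  have \<kappa>: "\<kappa> > 0" "\<kappa>^3 = 2 * pi^2 / \<mu>"
    using \<mu> by (simp_all add: \<kappa>_def powr_one_third_cube)
  have A: "A = 3/2 * \<mu> * \<kappa>" and B: "sqrt (pi / B) = S"
    using assms(2,3) exponent_constant_eq[OF \<mu>] gaussian_width_eq[OF \<mu>]
    by (simp_all add: S_def \<kappa>_def)
  interpret saddle_constants \<mu> \<kappa> A S
    using \<mu> \<kappa> A by unfold_locales (simp_all add: S_def)
  have "S > 0" "A > 0" using \<mu> \<kappa> by (simp_all add: S_def A)
  have \<beta>: "0 < 2/9 - \<delta>/3" "2/9 - \<delta>/3 < (1/3 :: real)" using \<delta> by simp_all
  have "\<forall>\<^sub>F N in sequentially. 0 \<le> (exp \<mu> - 1) * 4 ^ N" using \<mu> by simp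
  from bigo_sandwich[OF eventually_Z_between_envelopes[OF \<beta>] this
      Z_upper_envelope_asymp[OF \<open>S > 0\<close> \<open>A > 0\<close> \<kappa>(1) \<mu> \<delta>]
      Z_lower_envelope_asymp[OF \<open>S > 0\<close> \<open>A > 0\<close> \<kappa>(1) \<mu> \<delta>]]
  show ?thesis unfolding B by (simp add: mult_ac)
qed

end
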